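(* Let $\Gamma_n$ ($n\in\mathbb N$) be a sequence of nonatomic routing games on a fixed graph with fixed OD pairs $\mathcal I$, path sets $\mathcal P^i$ and edge costs $(c_e)_{e\in\mathcal E}$, where in $\Gamma_n$ OD pair $i$ has demand $m_n^i\ge 0$, total inflow $M_n=\sum_i m_n^i>0$ with $M_n\to\omega\in\{0,\infty\}$, and relative inflows $\lambda_n^i=m_n^i/M_n$. Let $c$ be a benchmark for $(c_e)$ at $\omega$. Suppose the network is tight relative to $c$, i.e. $0<\max_{i\in\mathcal I}\alpha^i<\infty$, where $\alpha^i=\min_{p\in\mathcal P^i}\max_{e\in p}\alpha_e$ and $\alpha_e=\lim_{x\to\omega}c_e(x)/c(x)$, and that every OD pair is salient, i.e. $\liminf_{n\to\infty}\lambda_n^i>0$ for every $i\in\mathcal I$. Then $\mathrm{PoA}(\Gamma_n)\to 1$.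
   Context: A nonatomic routing game consists of: a finite directed multigraph with edge set $\mathcal E$; a finite set $\mathcal I$ of OD pairs, each $i$ with demand $m^i\ge 0$ and a nonempty finite set $\mathcal P^i$ of paths from its origin to its destination, the $\mathcal P^i$ pairwise disjoint, $\mathcal P=\bigcup_i\mathcal P^i$; and continuous nondecreasing edge costs $c_e:[0,\infty)\to[0,\infty)$. Feasible flows: $f\in\mathbb R_+^{\mathcal P}$ with $\sum_{p\in\mathcal P^i}f_p=m^i$; loads $x_e=\sum_{p\ni e}f_p$; path costs $c_p(f)=\sum_{e\in p}c_e(x_e)$. A Wardrop equilibrium is a feasible $f^*$ with $c_p(f^* )\le c_{p'}(f^* )$ whenever $p,p'\in\mathcal P^i$, $f^*_p>0$. Social cost $L(x)=\sum_e x_ec_e(x_e)$; $\mathrm{Opt}$ its minimum over feasible loads, $\mathrm{Eq}=L(x^* )$ at an equilibrium load, $\mathrm{PoA}=\mathrm{Eq}/\mathrm{Opt}$ (set to $1$ if $\mathrm{Opt}=0$). A function $g:(0,\infty)\to(0,\infty)$ is regularly varying at $\omega$ if $\lim_{t\to\omega}g(tx)/g(t)$ is finite and nonzero for every $x>0$; a regularly varying (at $\omega$) function $c$ is a benchmark for $(c_e)$ at $\omega$ if $\alpha_e=\lim_{x\to\omega}c_e(x)/c(x)\in[0,\infty]$ exists for every edge $e$. *)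

theory Defs
  imports Complex_Main "HOL-Library.Extended_Real" "HOL-Library.Liminf_Limsup"
begin

fun walk :: "('e \<Rightarrow> 'v) \<Rightarrow> ('e \<Rightarrow> 'v) \<Rightarrow> 'v \<Rightarrow> 'e list \<Rightarrow> 'v \<Rightarrow> bool" where
  "walk src tgt u [] v = (u = v)"
| "walk src tgt u (e # es) v = (src e = u \<and> walk src tgt (tgt e) es v)"

definition is_path :: "'e set \<Rightarrow> ('e \<Rightarrow> 'v) \<Rightarrow> ('e \<Rightarrow> 'v) \<Rightarrow> 'v \<Rightarrow> 'v \<Rightarrow> 'e list \<Rightarrow> bool" where
  "is_path E src tgt u v p \<longleftrightarrow> set p \<subseteq> E \<and> distinct p \<and> walk src tgt u p v"

definition routing_network ::
  "'e set \<Rightarrow> ('e \<Rightarrow> 'v) \<Rightarrow> ('e \<Rightarrow> 'v) \<Rightarrow> 'i set \<Rightarrow> ('i \<Rightarrow> 'v) \<Rightarrow> ('i \<Rightarrow> 'v)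
    \<Rightarrow> ('i \<Rightarrow> 'e list set) \<Rightarrow> bool" where
  "routing_network E src tgt I orig dest P \<longleftrightarrow>
     finite E \<and> finite I \<and>
     (\<forall>i\<in>I. finite (P i) \<and> P i \<noteq> {} \<and> (\<forall>p\<in>P i. is_path E src tgt (orig i) (dest i) p)) \<and>
     (\<forall>i\<in>I. \<forall>j\<in>I. i \<noteq> j \<longrightarrow> P i \<inter> P j = {})"

definition admissible_costs :: "'e set \<Rightarrow> ('e \<Rightarrow> real \<Rightarrow> real) \<Rightarrow> bool" where
  "admissible_costs E c \<longleftrightarrow>
     (\<forall>e\<in>E. continuous_on {0..} (c e) \<and> mono_on {0..} (c e) \<and> (\<forall>x\<ge>0. c e x \<ge> 0))"

definition all_paths :: "'i set \<Rightarrow> ('i \<Rightarrow> 'e list set) \<Rightarrow> 'e list set" where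
  "all_paths I P = (\<Union>i\<in>I. P i)"

definition load :: "'i set \<Rightarrow> ('i \<Rightarrow> 'e list set) \<Rightarrow> ('e list \<Rightarrow> real) \<Rightarrow> 'e \<Rightarrow> real" where
  "load I P f e = (\<Sum>p\<in>{p\<in>all_paths I P. e \<in> set p}. f p)"

definition path_cost ::
  "('e \<Rightarrow> real \<Rightarrow> real) \<Rightarrow> 'i set \<Rightarrow> ('i \<Rightarrow> 'e list set) \<Rightarrow> ('e list \<Rightarrow> real) \<Rightarrow> 'e list \<Rightarrow> real" where
  "path_cost c I P f p = (\<Sum>e\<in>set p. c e (load I P f e))"

definition feasible :: "'i set \<Rightarrow> ('i \<Rightarrow> 'e list set) \<Rightarrow> ('i \<Rightarrow> real) \<Rightarrow> ('e list \<Rightarrow> real) \<Rightarrow> bool" where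
  "feasible I P m f \<longleftrightarrow> (\<forall>p\<in>all_paths I P. f p \<ge> 0) \<and> (\<forall>i\<in>I. (\<Sum>p\<in>P i. f p) = m i)"

definition wardrop ::
  "('e \<Rightarrow> real \<Rightarrow> real) \<Rightarrow> 'i set \<Rightarrow> ('i \<Rightarrow> 'e list set) \<Rightarrow> ('i \<Rightarrow> real) \<Rightarrow> ('e list \<Rightarrow> real) \<Rightarrow> bool" where
  "wardrop c I P m f \<longleftrightarrow> feasible I P m f \<and>
     (\<forall>i\<in>I. \<forall>p\<in>P i. \<forall>q\<in>P i. f p > 0 \<longrightarrow> path_cost c I P f p \<le> path_cost c I P f q)"

definition social_cost :: "'e set \<Rightarrow> ('e \<Rightarrow> real \<Rightarrow> real) \<Rightarrow> ('e \<Rightarrow> real) \<Rightarrow> real" where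
  "social_cost E c x = (\<Sum>e\<in>E. x e * c e (x e))"

definition opt_cost ::
  "'e set \<Rightarrow> ('e \<Rightarrow> real \<Rightarrow> real) \<Rightarrow> 'i set \<Rightarrow> ('i \<Rightarrow> 'e list set) \<Rightarrow> ('i \<Rightarrow> real) \<Rightarrow> real" where
  "opt_cost E c I P m = Inf {social_cost E c (load I P f) | f. feasible I P m f}"

definition poa ::
  "'e set \<Rightarrow> ('e \<Rightarrow> real \<Rightarrow> real) \<Rightarrow> 'i set \<Rightarrow> ('i \<Rightarrow> 'e list set) \<Rightarrow> ('i \<Rightarrow> real)
    \<Rightarrow> ('e list \<Rightarrow> real) \<Rightarrow> real" where
  "poa E c I P m f = (if opt_cost E c I P m = 0 then 1
                      else social_cost E c (load I P f) / opt_cost E c I P m)"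

text \<open>The point omega is encoded by the filter F (at_right 0 for omega = 0, at_top for omega = infinity).\<close>

definition regularly_varying :: "real filter \<Rightarrow> (real \<Rightarrow> real) \<Rightarrow> bool" where
  "regularly_varying F g \<longleftrightarrow>
     (\<forall>t>0. g t > 0) \<and> (\<forall>x>0. \<exists>L. L \<noteq> 0 \<and> ((\<lambda>t. g (t * x) / g t) \<longlongrightarrow> L) F)"

definition benchmark ::
  "real filter \<Rightarrow> 'e set \<Rightarrow> ('e \<Rightarrow> real \<Rightarrow> real) \<Rightarrow> (real \<Rightarrow> real) \<Rightarrow> ('e \<Rightarrow> ereal) \<Rightarrow> bool" where
  "benchmark F E c g \<alpha> \<longleftrightarrow> regularly_varying F g \<and>
     (\<forall>e\<in>E. ((\<lambda>x. ereal (c e x / g x)) \<longlongrightarrow> \<alpha> e) F)"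

text \<open>alpha^i = min over paths of max over edges of alpha_e (the max over an empty edge set is taken as 0).\<close>
definition od_alpha :: "('i \<Rightarrow> 'e list set) \<Rightarrow> ('e \<Rightarrow> ereal) \<Rightarrow> 'i \<Rightarrow> ereal" where
  "od_alpha P \<alpha> i = (INF p\<in>P i. max 0 (SUP e\<in>set p. \<alpha> e))"

end

theory Submission
  imports Defs "HOL-Analysis.Analysis"
begin

text \<open>
  Measure flows in units of the total inflow \<open>M\<^sub>n\<close> and costs in units of \<open>c(M\<^sub>n)\<close>. Since
  the benchmark is regularly varying with some index \<open>\<rho>\<close>, every edge with finite \<open>\<alpha>\<^sub>e\<close>
  then has cost profile close to \<open>\<alpha>\<^sub>e s\<^sup>\<rho>\<close>, uniformly on \<open>[\<delta>, 1]\<close> because costs are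
  monotone. For exact power laws with a common exponent the equilibrium is optimal: the
  variational inequality \<open>Eq \<le> \<Sum>\<^sub>e x\<^sub>e c\<^sub>e(x\<^sup>*\<^sub>e)\<close> together with Young's inequality
  \<open>x c(y) \<le> (x c(x) + \<rho> y c(y)) / (\<rho>+1)\<close> gives \<open>Eq \<le> Opt\<close>; asymptotically this holds up to
  \<open>\<epsilon> M\<^sub>n c(M\<^sub>n)\<close>. Edges with \<open>\<alpha>\<^sub>e = \<infinity>\<close> carry only a vanishing share of a near-optimal
  flow, which can be moved to paths avoiding them (these exist by tightness) at negligible
  cost. Finally, tightness and salience give \<open>Opt \<ge> \<kappa> M\<^sub>n c(M\<^sub>n)\<close>: an OD pair with
  maximal \<open>\<alpha>\<^sup>i\<close> sends a fixed fraction of the inflow over some path, and every such path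
  contains an edge with \<open>\<alpha>\<^sub>e \<ge> max\<^sub>i \<alpha>\<^sup>i > 0\<close>.
\<close>

section \<open>Young's inequality for approximate power laws\<close>

lemma young_powr:
  fixes u w \<rho> :: real
  assumes "u \<ge> 0" "w \<ge> 0" "\<rho> \<ge> 0"
  shows "u * w powr \<rho> \<le> (u powr (\<rho>+1) + \<rho> * w powr (\<rho>+1)) / (\<rho>+1)"
proof (cases "u = 0 \<or> w = 0")
  case True
  then show ?thesis using assms by (auto intro!: divide_nonneg_pos add_nonneg_nonneg)
next
  case False
  then have "u > 0" "w > 0" using assms by auto
  have "(u powr (\<rho>+1)) powr (1/(\<rho>+1)) * (w powr (\<rho>+1)) powr (\<rho>/(\<rho>+1))
        \<le> (1/(\<rho>+1)) * u powr (\<rho>+1) + (\<rho>/(\<rho>+1)) * w powr (\<rho>+1)"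
    using \<open>u > 0\<close> \<open>w > 0\<close> assms by (intro Youngs_inequality_0) (auto simp: field_simps)
  moreover have "(u powr (\<rho>+1)) powr (1/(\<rho>+1)) = u"
    using \<open>u > 0\<close> assms by (simp add: powr_powr)
  moreover have "(w powr (\<rho>+1)) powr (\<rho>/(\<rho>+1)) = w powr \<rho>"
    using \<open>w > 0\<close> assms by (simp add: powr_powr)
  ultimately show ?thesis using assms by (simp add: add_divide_distrib)
qed

text \<open>\<open>\<phi>\<close> stands for a rescaled edge cost \<open>s \<mapsto> c\<^sub>e(M s) / c(M)\<close>; near \<open>0\<close> only its
  monotonicity is used.\<close>

definition young_approx :: "real \<Rightarrow> real \<Rightarrow> real \<Rightarrow> real \<Rightarrow> real \<Rightarrow> bool" where
  "young_approx a \<rho> \<epsilon> \<delta> \<eta> \<longleftrightarrow> (\<forall>\<phi> u w. mono_on {0..1} \<phi> \<longrightarrow> (\<forall>s\<in>{0..1}. \<phi> s \<ge> 0) \<longrightarrow>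
     (\<forall>s\<in>{\<delta>..1}. \<bar>\<phi> s - a * s powr \<rho>\<bar> \<le> \<eta>) \<longrightarrow> u \<in> {0..1} \<longrightarrow> w \<in> {0..1} \<longrightarrow>
     u * \<phi> w \<le> (u * \<phi> u + \<rho> * (w * \<phi> w)) / (\<rho>+1) + \<epsilon>)"

definition reroute_approx :: "real \<Rightarrow> real \<Rightarrow> real \<Rightarrow> real \<Rightarrow> real \<Rightarrow> real \<Rightarrow> bool" where
  "reroute_approx a \<rho> \<epsilon> \<delta> \<eta> d \<longleftrightarrow> (\<forall>\<phi> u v. mono_on {0..1} \<phi> \<longrightarrow> (\<forall>s\<in>{0..1}. \<phi> s \<ge> 0) \<longrightarrow>
     (\<forall>s\<in>{\<delta>..1}. \<bar>\<phi> s - a * s powr \<rho>\<bar> \<le> \<eta>) \<longrightarrow> 0 \<le> u \<longrightarrow> u \<le> v \<longrightarrow> v \<le> 1 \<longrightarrow>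
     v - u \<le> d \<longrightarrow> v * \<phi> v - u * \<phi> u \<le> \<epsilon>)"

lemma mono_on_bounded_by_approx:
  fixes \<phi> :: "real \<Rightarrow> real"
  assumes "mono_on {0..1} \<phi>" "\<forall>s\<in>{\<delta>..1}. \<bar>\<phi> s - a * s powr \<rho>\<bar> \<le> \<eta>"
    "\<delta> \<le> 1" "\<eta> \<le> 1" "s \<in> {0..1}"
  shows "\<phi> s \<le> a + 1"
  using mono_onD[OF assms(1) assms(5), of 1] assms(2)[rule_format, of 1] assms(3-5) by auto

lemma young_powr_perturbed:
  fixes \<phi> :: "real \<Rightarrow> real"
  assumes "u \<in> {0..1}" "w \<in> {0..1}" "u > 0" "w > 0" "a \<ge> 0" "\<rho> \<ge> 0" "\<eta> \<ge> 0"
    and "\<bar>\<phi> u - a * u powr \<rho>\<bar> \<le> \<eta>" "\<bar>\<phi> w - a * w powr \<rho>\<bar> \<le> \<eta>"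
  shows "(\<rho>+1) * (u * \<phi> w) \<le> u * \<phi> u + \<rho> * (w * \<phi> w) + (\<rho>+1) * (2 * \<eta>)"
proof -
  have "(\<rho>+1) * (u * \<phi> w) \<le> (\<rho>+1) * (a * (u * w powr \<rho>) + \<eta>)"
  proof -
    have "u * \<phi> w \<le> u * (a * w powr \<rho> + \<eta>)" using assms by (intro mult_left_mono) auto
    also have "\<dots> \<le> a * (u * w powr \<rho>) + \<eta>"
      using assms mult_left_le_one_le[of \<eta> u] by (simp add: algebra_simps)
    finally show ?thesis using assms by (intro mult_left_mono) auto
  qed
  also have "\<dots> = a * ((\<rho>+1) * (u * w powr \<rho>)) + (\<rho>+1) * \<eta>"
    by (simp add: algebra_simps)
  also have "\<dots> \<le> a * (u powr (\<rho>+1) + \<rho> * w powr (\<rho>+1)) + (\<rho>+1) * \<eta>"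
    using young_powr[of u w \<rho>] assms
    by (intro add_mono mult_left_mono order.refl) (auto simp: le_divide_eq mult.commute)
  also have "\<dots> = u * (a * u powr \<rho>) + \<rho> * (w * (a * w powr \<rho>)) + (\<rho>+1) * \<eta>"
    using assms by (simp add: powr_add algebra_simps)
  also have "\<dots> \<le> u * (\<phi> u + \<eta>) + \<rho> * (w * (\<phi> w + \<eta>)) + (\<rho>+1) * \<eta>"
    using assms by (intro add_mono mult_left_mono order.refl) auto
  also have "\<dots> \<le> u * \<phi> u + \<rho> * (w * \<phi> w) + (\<rho>+1) * (2 * \<eta>)"
  proof -
    have "u * \<eta> \<le> \<eta>" "w * \<eta> \<le> \<eta>"
      using assms mult_left_le_one_le[of \<eta> u] mult_left_le_one_le[of \<eta> w] by (auto simp: mult.commute)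
    then show ?thesis
      using assms mult_left_mono[of "w * \<eta>" \<eta> \<rho>] by (simp add: algebra_simps)
  qed
  finally show ?thesis .
qed

lemma young_approxI:
  fixes a \<rho> \<epsilon> \<delta> \<eta> :: real
  assumes "\<epsilon> > 0" "a \<ge> 0" "\<rho> \<ge> 0" "0 < \<delta>" "\<delta> < 1" "0 < \<eta>" "\<eta> \<le> \<epsilon>/4" "\<eta> \<le> 1"
    and \<delta>: "\<rho> * a * \<delta> powr \<rho> < \<epsilon>/2" "\<delta> * (a+1) < \<epsilon>"
  shows "young_approx a \<rho> \<epsilon> \<delta> \<eta>"
  unfolding young_approx_def
proof (intro allI impI)
  fix \<phi> :: "real \<Rightarrow> real" and u w :: real
  assume mono: "mono_on {0..1} \<phi>" and nn: "\<forall>s\<in>{0..1}. \<phi> s \<ge> 0"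
    and close: "\<forall>s\<in>{\<delta>..1}. \<bar>\<phi> s - a * s powr \<rho>\<bar> \<le> \<eta>" and u: "u \<in> {0..1}" and w: "w \<in> {0..1}"
  have nn_u: "0 \<le> u * \<phi> u" and nn_w: "0 \<le> \<rho> * (w * \<phi> w)" using nn u w assms by auto
  have "(\<rho>+1) * (u * \<phi> w) \<le> u * \<phi> u + \<rho> * (w * \<phi> w) + (\<rho>+1) * \<epsilon>"
  proof (cases "u < \<delta>")
    case True
    have "u * \<phi> w \<le> \<delta> * (a+1)"
      using True u w nn mono_on_bounded_by_approx[OF mono close] assms by (intro mult_mono) auto
    then have "(\<rho>+1) * (u * \<phi> w) \<le> (\<rho>+1) * \<epsilon>"
      using \<delta>(2) assms by (intro mult_left_mono) auto
    then show ?thesis using nn_u nn_w by linarith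
  next
    case u_ge: False
    show ?thesis
    proof (cases "w < \<delta>")
      case True
      have "u * \<phi> w \<le> u * \<phi> u"
        using True u_ge u w by (intro mult_left_mono mono_onD[OF mono]) auto
      moreover have small: "u * \<phi> w \<le> a * \<delta> powr \<rho> + \<eta>"
      proof -
        have "\<phi> w \<le> \<phi> \<delta>" using True w assms by (intro mono_onD[OF mono]) auto
        also have "\<dots> \<le> a * \<delta> powr \<rho> + \<eta>" using close[rule_format, of \<delta>] assms by auto
        finally show ?thesis using u nn w by (intro mult_left_le_one_le[THEN order_trans]) auto
      qed
      then have "\<rho> * (u * \<phi> w) \<le> \<rho> * a * \<delta> powr \<rho> + \<rho> * \<eta>"
        using mult_left_mono[OF small, of \<rho>] assms by (simp add: distrib_left mult.assoc)
      moreover have "\<rho> * \<eta> \<le> \<rho> * \<epsilon>" using assms by (intro mult_left_mono) auto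
      moreover have "(\<rho>+1) * (u * \<phi> w) = u * \<phi> w + \<rho> * (u * \<phi> w)" by (simp add: algebra_simps)
      moreover have "(\<rho>+1) * \<epsilon> = \<epsilon> + \<rho> * \<epsilon>" by (simp add: algebra_simps)
      ultimately show ?thesis using \<delta>(1) nn_w assms(1) by linarith
    next
      case False
      have "(\<rho>+1) * (2 * \<eta>) \<le> (\<rho>+1) * \<epsilon>" using assms by (intro mult_left_mono) auto
      moreover have "(\<rho>+1) * (u * \<phi> w) \<le> u * \<phi> u + \<rho> * (w * \<phi> w) + (\<rho>+1) * (2 * \<eta>)"
        using u_ge False u w assms close[rule_format, of u] close[rule_format, of w]
        by (intro young_powr_perturbed) auto
      ultimately show ?thesis by linarith
    qed
  qed
  then show "u * \<phi> w \<le> (u * \<phi> u + \<rho> * (w * \<phi> w)) / (\<rho>+1) + \<epsilon>"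
    using assms by (simp add: field_simps)
qed

lemma young_approx_exists:
  fixes a \<rho> \<epsilon> :: real
  assumes "\<epsilon> > 0" "a \<ge> 0" "\<rho> \<ge> 0"
  shows "\<exists>\<delta> \<eta>. 0 < \<delta> \<and> \<delta> < 1 \<and> 0 < \<eta> \<and> young_approx a \<rho> \<epsilon> \<delta> \<eta>"
proof -
  have "\<forall>\<^sub>F \<delta> in at_right 0. \<rho> * a * \<delta> powr \<rho> < \<epsilon>/2"
  proof (cases "\<rho> = 0")
    case True
    then show ?thesis using assms by simp
  next
    case False
    have "((\<lambda>x. x powr \<rho>) \<longlongrightarrow> 0 powr \<rho>) (at_right (0::real))"
      using False assms eventually_at_right_less[of "0::real"]
      by (intro tendsto_powr') (auto intro!: tendsto_ident_at elim: eventually_mono)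
    then have "((\<lambda>x. \<rho> * a * x powr \<rho>) \<longlongrightarrow> \<rho> * a * 0) (at_right 0)"
      using False by (intro tendsto_mult_left) simp
    then show ?thesis using assms by (intro order_tendstoD(2)) auto
  qed
  moreover have "\<forall>\<^sub>F \<delta> in at_right (0::real). \<delta> * (a+1) < \<epsilon>"
    using assms by (intro order_tendstoD(2)[of _ "0 * (a+1)"] tendsto_intros) auto
  moreover have "\<forall>\<^sub>F \<delta> in at_right (0::real). 0 < \<delta> \<and> \<delta> < 1"
    unfolding eventually_at_right_field by (intro exI[of _ 1]) auto
  ultimately have "\<forall>\<^sub>F \<delta> in at_right (0::real). \<rho> * a * \<delta> powr \<rho> < \<epsilon>/2 \<and> \<delta> * (a+1) < \<epsilon> \<and> 0 < \<delta> \<and> \<delta> < 1"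
    by eventually_elim auto
  then obtain \<delta> where "\<rho> * a * \<delta> powr \<rho> < \<epsilon>/2" "\<delta> * (a+1) < \<epsilon>" "0 < \<delta>" "\<delta> < 1"
    using eventually_happens'[OF trivial_limit_at_right_real] by blast
  moreover have "young_approx a \<rho> \<epsilon> \<delta> (min 1 (\<epsilon>/4))"
    using calculation assms by (intro young_approxI) auto
  ultimately show ?thesis using assms by (intro exI[of _ \<delta>] exI[of _ "min 1 (\<epsilon>/4)"]) auto
qed

lemma reroute_approxI:
  fixes a \<rho> \<epsilon> \<delta> \<eta> d :: real
  assumes "\<epsilon> > 0" "0 < \<delta>" "\<delta> \<le> 1" "0 < \<eta>" "\<eta> \<le> \<epsilon>/4" "\<eta> \<le> 1" "d \<le> \<delta>"
    "2 * \<delta> * (a+1) \<le> \<epsilon>/2"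
    and ucont: "\<And>u v. u \<in> {\<delta>..1} \<Longrightarrow> v \<in> {\<delta>..1} \<Longrightarrow> u \<le> v \<Longrightarrow> v - u \<le> d \<Longrightarrow>
      a * v powr (\<rho>+1) - a * u powr (\<rho>+1) < \<epsilon>/2"
  shows "reroute_approx a \<rho> \<epsilon> \<delta> \<eta> d"
  unfolding reroute_approx_def
proof (intro allI impI)
  fix \<phi> :: "real \<Rightarrow> real" and u v :: real
  assume mono: "mono_on {0..1} \<phi>" and nn: "\<forall>s\<in>{0..1}. \<phi> s \<ge> 0"
    and close: "\<forall>s\<in>{\<delta>..1}. \<bar>\<phi> s - a * s powr \<rho>\<bar> \<le> \<eta>"
    and uv: "0 \<le> u" "u \<le> v" "v \<le> 1" "v - u \<le> d"
  have "0 \<le> u * \<phi> u" using uv nn by auto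
  show "v * \<phi> v - u * \<phi> u \<le> \<epsilon>"
  proof (cases "u < \<delta>")
    case True
    have "v * \<phi> v \<le> (2 * \<delta>) * (a + 1)"
      using True uv nn mono_on_bounded_by_approx[OF mono close, of v] assms by (intro mult_mono) auto
    then show ?thesis using assms \<open>0 \<le> u * \<phi> u\<close> by linarith
  next
    case False
    have "u > 0" "v > 0" using False uv assms by auto
    have "\<phi> v \<le> a * v powr \<rho> + \<eta>" "a * u powr \<rho> \<le> \<phi> u + \<eta>"
      using close[rule_format, of u] close[rule_format, of v] False uv by auto
    then have "v * \<phi> v \<le> v * (a * v powr \<rho> + \<eta>)" "u * (a * u powr \<rho>) \<le> u * (\<phi> u + \<eta>)"
      using \<open>u > 0\<close> \<open>v > 0\<close> by (auto intro: mult_left_mono)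
    then have "v * \<phi> v \<le> a * v powr (\<rho>+1) + v * \<eta>" "a * u powr (\<rho>+1) \<le> u * \<phi> u + u * \<eta>"
      using \<open>u > 0\<close> \<open>v > 0\<close> by (simp_all add: powr_add algebra_simps)
    moreover have "a * v powr (\<rho>+1) - a * u powr (\<rho>+1) < \<epsilon>/2" using False uv by (intro ucont) auto
    moreover have "v * \<eta> \<le> \<eta>" "u * \<eta> \<le> \<eta>" using uv assms by (auto simp: mult_left_le_one_le)
    ultimately show ?thesis using assms by linarith
  qed
qed

lemma reroute_approx_exists:
  fixes a \<rho> \<epsilon> :: real
  assumes "\<epsilon> > 0" "a \<ge> 0" "\<rho> \<ge> 0"
  shows "\<exists>\<delta> \<eta> d. 0 < \<delta> \<and> \<delta> < 1 \<and> 0 < \<eta> \<and> 0 < d \<and> reroute_approx a \<rho> \<epsilon> \<delta> \<eta> d"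
proof -
  define \<delta> where "\<delta> = min (1/2) (\<epsilon>/(4*(a+1)))"
  have "\<delta> * (a+1) \<le> \<epsilon>/(4*(a+1)) * (a+1)"
    using assms by (intro mult_right_mono) (auto simp: \<delta>_def)
  also have "\<dots> = \<epsilon>/4" using assms by (simp add: field_simps)
  finally have "2 * \<delta> * (a+1) \<le> \<epsilon>/2" by simp
  moreover have "0 < \<delta>" using assms by (simp add: \<delta>_def)
  moreover have "\<delta> \<le> 1/2" unfolding \<delta>_def by (rule min.cobounded1)
  ultimately have \<delta>: "0 < \<delta>" "\<delta> \<le> 1/2" "2 * \<delta> * (a+1) \<le> \<epsilon>/2" by auto
  have "uniformly_continuous_on {\<delta>..1} (\<lambda>s. a * s powr (\<rho>+1))"
    using \<delta> by (intro compact_uniformly_continuous continuous_intros) auto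
  then obtain d0 where d0: "d0 > 0" and
    ucont: "\<And>x x'. x \<in> {\<delta>..1} \<Longrightarrow> x' \<in> {\<delta>..1} \<Longrightarrow> dist x' x < d0 \<Longrightarrow>
      dist (a * x' powr (\<rho>+1)) (a * x powr (\<rho>+1)) < \<epsilon>/2"
    unfolding uniformly_continuous_on_def using assms by (meson half_gt_zero)
  define d where "d = min \<delta> (d0/2)"
  have "a * v powr (\<rho>+1) - a * u powr (\<rho>+1) < \<epsilon>/2"
    if "u \<in> {\<delta>..1}" "v \<in> {\<delta>..1}" "u \<le> v" "v - u \<le> d" for u v
  proof -
    have "dist (a * v powr (\<rho>+1)) (a * u powr (\<rho>+1)) < \<epsilon>/2"
      using that d0 by (intro ucont) (auto simp: d_def dist_real_def)
    then show ?thesis unfolding dist_real_def abs_less_iff by linarith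
  qed
  then have "reroute_approx a \<rho> \<epsilon> \<delta> (min 1 (\<epsilon>/4)) d"
    using \<delta> assms by (intro reroute_approxI) (auto simp: d_def)
  moreover have "0 < d" "\<delta> < 1" using \<delta> d0 by (auto simp: d_def)
  ultimately show ?thesis using \<delta> assms by (intro exI[of _ \<delta>] exI[of _ "min 1 (\<epsilon>/4)"] exI[of _ d]) auto
qed

lemma young_approx_rescale:
  fixes ce :: "real \<Rightarrow> real"
  assumes "young_approx a \<rho> \<epsilon> \<delta> \<eta>" "M > 0" "k > 0" "\<rho> \<ge> 0"
    and "mono_on {0..1} (\<lambda>s. ce (M * s) / k)" "\<forall>s\<in>{0..1}. ce (M * s) / k \<ge> 0"
    and "\<forall>s\<in>{\<delta>..1}. \<bar>ce (M * s) / k - a * s powr \<rho>\<bar> \<le> \<eta>"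
    and "0 \<le> u" "u \<le> M" "0 \<le> w" "w \<le> M"
  shows "u * ce w \<le> (u * ce u + \<rho> * (w * ce w)) / (\<rho>+1) + \<epsilon> * (M * k)"
proof -
  have "u/M \<in> {0..1}" "w/M \<in> {0..1}" using assms by auto
  with assms(1,5-7) have "u/M * (ce (M * (w/M)) / k)
      \<le> (u/M * (ce (M * (u/M)) / k) + \<rho> * (w/M * (ce (M * (w/M)) / k))) / (\<rho>+1) + \<epsilon>"
    unfolding young_approx_def by blast
  then have "(u * ce w) / (M * k) \<le> ((u * ce u + \<rho> * (w * ce w)) / (\<rho>+1)) / (M * k) + \<epsilon>"
    using assms(2,3) by (simp add: field_simps)
  then have "(u * ce w) / (M * k) \<le> ((u * ce u + \<rho> * (w * ce w)) / (\<rho>+1) + \<epsilon> * (M * k)) / (M * k)"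
    using assms(2,3) by (simp add: add_divide_distrib)
  then show ?thesis using assms(2,3) by (simp add: divide_le_cancel)
qed

lemma reroute_approx_rescale:
  fixes ce :: "real \<Rightarrow> real"
  assumes "reroute_approx a \<rho> \<epsilon> \<delta> \<eta> d" "M > 0" "k > 0"
    and "mono_on {0..1} (\<lambda>s. ce (M * s) / k)" "\<forall>s\<in>{0..1}. ce (M * s) / k \<ge> 0"
    and "\<forall>s\<in>{\<delta>..1}. \<bar>ce (M * s) / k - a * s powr \<rho>\<bar> \<le> \<eta>"
    and "0 \<le> u" "u \<le> v" "v \<le> M" "v - u \<le> d * M"
  shows "v * ce v - u * ce u \<le> \<epsilon> * (M * k)"
proof -
  have "0 \<le> u/M" "u/M \<le> v/M" "v/M \<le> 1" "v/M - u/M \<le> d"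
    using assms(2,7-10) by (auto simp: divide_right_mono diff_divide_distrib[symmetric] pos_divide_le_eq)
  with assms(1,4-6) have "v/M * (ce (M * (v/M)) / k) - u/M * (ce (M * (u/M)) / k) \<le> \<epsilon>"
    unfolding reroute_approx_def by blast
  then have "(v * ce v - u * ce u) / (M * k) \<le> \<epsilon>" using assms(2,3) by (simp add: field_simps)
  then show ?thesis using assms(2,3) by (simp add: pos_divide_le_eq)
qed

section \<open>Monotone functions and limits\<close>

lemma mono_on_close_from_grid:
  fixes f g :: "real \<Rightarrow> real" and \<delta> h \<eta> :: real and N :: nat
  assumes mono: "mono_on {\<delta>..1} f" and h: "h > 0" "\<delta> + real N * h = 1"
    and g: "\<And>x x'. x \<in> {\<delta>..1} \<Longrightarrow> x' \<in> {\<delta>..1} \<Longrightarrow> \<bar>x' - x\<bar> \<le> h \<Longrightarrow> \<bar>g x' - g x\<bar> < \<eta>/2"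
    and grid: "\<And>k. k \<le> N \<Longrightarrow> \<bar>f (\<delta> + real k * h) - g (\<delta> + real k * h)\<bar> < \<eta>/2"
    and s: "s \<in> {\<delta>..1}"
  shows "\<bar>f s - g s\<bar> \<le> \<eta>"
proof -
  define t where "t k = \<delta> + real k * h" for k :: nat
  have t_in: "t k \<in> {\<delta>..1}" if "k \<le> N" for k
  proof -
    have "real k * h \<le> real N * h" "0 \<le> real k * h" using h that by (auto intro: mult_right_mono)
    then show ?thesis using h unfolding t_def atLeastAtMost_iff by linarith
  qed
  define q where "q = (s - \<delta>) / h"
  have q: "0 \<le> q" "q \<le> real N" "s = \<delta> + q * h" using s h by (auto simp: q_def field_simps)
  define k where "k = nat \<lfloor>q\<rfloor>"
  have "real k \<le> q" "q < real k + 1" using q by (auto simp: k_def)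
  then have k: "t k \<le> s" "s < t (Suc k)" "k \<le> N"
    using q h mult_right_mono[of "real k" q h] mult_strict_right_mono[of q "real k + 1" h]
    by (auto simp: t_def algebra_simps)
  have "f (t k) \<le> f s" using mono_onD[OF mono t_in[OF k(3)] s k(1)] .
  moreover have "\<bar>g (t k) - g s\<bar> < \<eta>/2"
    using k t_in[OF k(3)] s h by (intro g) (auto simp: t_def algebra_simps)
  ultimately have low: "g s - \<eta> \<le> f s" using grid[OF k(3)] unfolding t_def by linarith
  have "f s \<le> g s + \<eta>"
  proof (cases "k = N")
    case True
    then have "s = t N" using k s h by (auto simp: t_def)
    then have "\<bar>f s - g s\<bar> < \<eta>/2" using grid[of N] by (simp add: t_def)
    then show ?thesis unfolding abs_less_iff by linarith
  next
    case False
    then have "Suc k \<le> N" using k by simp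
    have "f s \<le> f (t (Suc k))" using mono_onD[OF mono s t_in[OF \<open>Suc k \<le> N\<close>]] k by simp
    moreover have "\<bar>g (t (Suc k)) - g s\<bar> < \<eta>/2"
      using k t_in[OF \<open>Suc k \<le> N\<close>] s h by (intro g) (auto simp: t_def algebra_simps)
    ultimately show ?thesis using grid[OF \<open>Suc k \<le> N\<close>] unfolding t_def by linarith
  qed
  with low show ?thesis by linarith
qed

lemma mono_on_tendsto_uniformly:
  fixes f :: "'a \<Rightarrow> real \<Rightarrow> real" and g :: "real \<Rightarrow> real"
  assumes "0 < \<delta>" "\<delta> < 1" "continuous_on {\<delta>..1} g"
    and lim: "\<And>s. s \<in> {\<delta>..1} \<Longrightarrow> ((\<lambda>n. f n s) \<longlongrightarrow> g s) F"
    and mono: "\<forall>\<^sub>F n in F. mono_on {\<delta>..1} (f n)" and "\<eta> > 0"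
  shows "\<forall>\<^sub>F n in F. \<forall>s\<in>{\<delta>..1}. \<bar>f n s - g s\<bar> \<le> \<eta>"
proof -
  have "uniformly_continuous_on {\<delta>..1} g" using assms(3) by (intro compact_uniformly_continuous) auto
  then obtain dd where dd: "dd > 0" and
    uc: "\<And>x x'. x \<in> {\<delta>..1} \<Longrightarrow> x' \<in> {\<delta>..1} \<Longrightarrow> dist x' x < dd \<Longrightarrow> dist (g x') (g x) < \<eta>/2"
    unfolding uniformly_continuous_on_def using \<open>\<eta> > 0\<close> by (meson half_gt_zero)
  obtain N :: nat where N: "(1-\<delta>)/dd < real N" using reals_Archimedean2 by blast
  then have "real N > 0" using assms(2) dd by (smt (verit) divide_pos_pos)
  define h where "h = (1-\<delta>)/N"
  have h: "h > 0" "h < dd" "\<delta> + real N * h = 1"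
    using N dd assms(1,2) \<open>real N > 0\<close> by (auto simp: h_def field_simps)
  have g: "\<bar>g x' - g x\<bar> < \<eta>/2" if "x \<in> {\<delta>..1}" "x' \<in> {\<delta>..1}" "\<bar>x' - x\<bar> \<le> h" for x x'
    using uc[OF that(1,2)] that(3) h(2) by (simp add: dist_real_def)
  have "\<forall>\<^sub>F n in F. \<forall>k\<in>{..N}. \<bar>f n (\<delta> + real k * h) - g (\<delta> + real k * h)\<bar> < \<eta>/2"
  proof (intro eventually_ball_finite ballI)
    fix k assume "k \<in> {..N}"
    then have "real k * h \<le> real N * h" "0 \<le> real k * h" using h by (auto intro: mult_right_mono)
    then have "\<delta> + real k * h \<in> {\<delta>..1}" using h unfolding atLeastAtMost_iff by linarith
    from tendstoD[OF lim[OF this], of "\<eta>/2"] \<open>\<eta> > 0\<close>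
    show "\<forall>\<^sub>F n in F. \<bar>f n (\<delta> + real k * h) - g (\<delta> + real k * h)\<bar> < \<eta>/2"
      by (simp add: dist_real_def)
  qed simp
  with mono show ?thesis
    by eventually_elim (use h g in \<open>blast intro: mono_on_close_from_grid\<close>)
qed

lemma eventually_ball_finite_ex_pos:
  fixes Q :: "'a \<Rightarrow> real \<Rightarrow> 'b \<Rightarrow> bool"
  assumes "finite S" and ex: "\<And>x. x \<in> S \<Longrightarrow> \<exists>r>0. \<forall>\<^sub>F n in F. Q x r n"
    and antimono: "\<And>x r r' n. 0 < r' \<Longrightarrow> r' \<le> r \<Longrightarrow> Q x r n \<Longrightarrow> Q x r' n"
  shows "\<exists>r>0. \<forall>\<^sub>F n in F. \<forall>x\<in>S. Q x r n"
proof -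
  obtain r where r: "\<And>x. x \<in> S \<Longrightarrow> r x > 0 \<and> (\<forall>\<^sub>F n in F. Q x (r x) n)"
    using ex by metis
  define r0 where "r0 = Min (insert 1 (r ` S))"
  have "r0 > 0" using assms(1) r by (auto simp: r0_def)
  have r0_le: "r0 \<le> r x" if "x \<in> S" for x using assms(1) that by (auto simp: r0_def)
  have "\<forall>\<^sub>F n in F. \<forall>x\<in>S. Q x r0 n"
  proof (intro eventually_ball_finite[OF assms(1)] ballI)
    fix x assume "x \<in> S"
    with r have "\<forall>\<^sub>F n in F. Q x (r x) n" by blast
    then show "\<forall>\<^sub>F n in F. Q x r0 n"
      by (rule eventually_mono) (rule antimono[OF \<open>r0 > 0\<close> r0_le[OF \<open>x \<in> S\<close>]])
  qed
  then show ?thesis using \<open>r0 > 0\<close> by blast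
qed

lemma mono_additive_linear:
  fixes G :: "real \<Rightarrow> real"
  assumes add: "\<And>a b. G (a + b) = G a + G b" and mono: "mono G"
  shows "G s = G 1 * s"
proof -
  have G0: "G 0 = 0" using add[of 0 0] by simp
  have G_nat: "G (real n * a) = real n * G a" for n :: nat and a
    by (induction n) (auto simp: add distrib_right add.commute G0)
  have G_int: "G (real_of_int k * a) = real_of_int k * G a" for k :: int and a
  proof (cases "k \<ge> 0")
    case True
    then show ?thesis using G_nat[of "nat k" a] by simp
  next
    case False
    have "G (- b) = - G b" for b using add[of b "-b"] G0 by simp
    moreover have "real_of_int k * a = - (real (nat (-k)) * a)" using False by simp
    ultimately show ?thesis using G_nat[of "nat (-k)" a] False by simp
  qed
  define \<rho> where "\<rho> = G 1"
  have "\<rho> \<ge> 0" using monoD[OF mono, of 0 1] G0 by (simp add: \<rho>_def)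
  have bound: "\<bar>G s - \<rho> * s\<bar> \<le> \<rho> / real n" if "n > 0" for n :: nat
  proof -
    define k where "k = \<lfloor>real n * s\<rfloor>"
    have k: "real_of_int k \<le> real n * s" "real n * s \<le> real_of_int (k + 1)"
      by (auto simp: k_def)
    have "G (real_of_int k) = real_of_int k * \<rho>" "G (real_of_int (k + 1)) = real_of_int (k + 1) * \<rho>"
      using G_int[of k 1] G_int[of "k + 1" 1] by (simp_all only: \<rho>_def mult_1_right)
    then have "real_of_int k * \<rho> \<le> real n * G s" "real n * G s \<le> real_of_int (k + 1) * \<rho>"
      using monoD[OF mono k(1)] monoD[OF mono k(2)] G_nat[of n s] by simp_all
    moreover have "real_of_int k * \<rho> \<le> real n * s * \<rho>" "real n * s * \<rho> \<le> (real_of_int k + 1) * \<rho>"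
      using k \<open>\<rho> \<ge> 0\<close> by (auto intro: mult_right_mono)
    ultimately have "\<bar>real n * G s - real n * (\<rho> * s)\<bar> \<le> \<rho>"
      unfolding abs_le_iff by (simp add: algebra_simps)
    then have "real n * \<bar>G s - \<rho> * s\<bar> \<le> \<rho>"
      by (simp add: abs_mult right_diff_distrib[symmetric])
    then show ?thesis using that by (simp add: field_simps)
  qed
  have "\<bar>G s - \<rho> * s\<bar> \<le> 0"
  proof (rule field_le_epsilon)
    fix e :: real assume "e > 0"
    obtain n :: nat where n: "\<rho> / e < real n" using reals_Archimedean2 by blast
    then have "n > 0" using \<open>\<rho> \<ge> 0\<close> \<open>e > 0\<close> by (smt (verit) divide_nonneg_pos of_nat_0_less_iff)
    then have "\<rho> / real n \<le> e" using n \<open>e > 0\<close> by (simp add: field_simps)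
    then show "\<bar>G s - \<rho> * s\<bar> \<le> 0 + e" using bound[OF \<open>n > 0\<close>] by simp
  qed
  then show ?thesis by (simp add: \<rho>_def mult.commute)
qed

lemma mono_multiplicative_eq_powr:
  fixes h :: "real \<Rightarrow> real"
  assumes pos: "\<And>x. x > 0 \<Longrightarrow> h x > 0"
    and mono: "\<And>x y. 0 < x \<Longrightarrow> x \<le> y \<Longrightarrow> h x \<le> h y"
    and mult: "\<And>x y. 0 < x \<Longrightarrow> 0 < y \<Longrightarrow> h (x * y) = h x * h y"
  obtains \<rho> where "\<rho> \<ge> 0" "\<And>x. x > 0 \<Longrightarrow> h x = x powr \<rho>"
proof -
  define G where "G s = ln (h (exp s))" for s
  have "G (a + b) = G a + G b" for a b
    using mult[of "exp a" "exp b"] pos[of "exp a"] pos[of "exp b"] by (simp add: G_def exp_add ln_mult)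
  moreover have "mono G"
    using mono pos by (intro monoI) (simp add: G_def)
  ultimately have lin: "G s = G 1 * s" for s by (rule mono_additive_linear)
  show ?thesis
  proof (rule that)
    show "G 1 \<ge> 0" using lin[of 0] monoD[OF \<open>mono G\<close>, of 0 1] by simp
    fix x :: real assume "x > 0"
    then have "ln (h x) = G 1 * ln x" using lin[of "ln x"] by (simp add: G_def mult.commute)
    then show "h x = x powr G 1"
      using pos[OF \<open>x > 0\<close>] \<open>x > 0\<close> by (metis exp_ln powr_def mult.commute less_irrefl)
  qed
qed

section \<open>Regular variation\<close>

lemma omega_filter_facts:
  fixes F :: "real filter"
  assumes "F = at_right 0 \<or> F = at_top"
  shows omega_filter_nontrivial: "F \<noteq> bot" and omega_filter_eventually_pos: "eventually (\<lambda>t. t > 0) F"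
    and omega_filter_scale: "\<And>x. x > 0 \<Longrightarrow> filterlim (\<lambda>t. t * x) F F"
proof -
  show "F \<noteq> bot" using assms trivial_limit_at_right_real[of "0::real"] trivial_limit_at_top_linorder by (auto simp: trivial_limit_def)
  show ev: "eventually (\<lambda>t. t > 0) F" using assms
    by (auto simp: eventually_at_right_less eventually_gt_at_top)
  fix x :: real assume x: "x > 0"
  show "filterlim (\<lambda>t. t * x) F F"
    using assms
  proof
    assume F: "F = at_right 0"
    have "((\<lambda>t. t * x) \<longlongrightarrow> 0 * x) (at_right 0)" by (intro tendsto_intros)
    moreover have "eventually (\<lambda>t. t * x > 0) (at_right (0::real))"
      using eventually_at_right_less[of "0::real"] by eventually_elim (use x in simp)
    ultimately show ?thesis unfolding F by (intro tendsto_imp_filterlim_at_right) auto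
  next
    assume F: "F = at_top"
    have "filterlim (\<lambda>t. x * t) at_top at_top"
      by (rule filterlim_tendsto_pos_mult_at_top[OF tendsto_const x filterlim_ident])
    then show ?thesis unfolding F by (simp add: mult.commute)
  qed
qed

locale regular_variation =
  fixes F :: "real filter" and cb :: "real \<Rightarrow> real"
  assumes omega: "F = at_right 0 \<or> F = at_top" and rv: "regularly_varying F cb"
begin

lemma F_nontrivial: "F \<noteq> bot" using omega_filter_nontrivial[OF omega] .
lemma eventually_pos: "eventually (\<lambda>t. t > 0) F" using omega_filter_eventually_pos[OF omega] .
lemma scale_filterlim: "x > 0 \<Longrightarrow> filterlim (\<lambda>t. t * x) F F" using omega_filter_scale[OF omega] .
lemma cb_pos: "t > 0 \<Longrightarrow> cb t > 0" using rv by (auto simp: regularly_varying_def)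

definition rv_limit where "rv_limit x = Lim F (\<lambda>t. cb (t * x) / cb t)"

lemma rv_limit_tendsto:
  assumes "x > 0" shows "((\<lambda>t. cb (t * x) / cb t) \<longlongrightarrow> rv_limit x) F"
proof -
  obtain L where "((\<lambda>t. cb (t * x) / cb t) \<longlongrightarrow> L) F"
    using rv assms unfolding regularly_varying_def by blast
  moreover from this have "rv_limit x = L"
    unfolding rv_limit_def using F_nontrivial by (intro tendsto_Lim) (auto simp: trivial_limit_def)
  ultimately show ?thesis by simp
qed

lemma rv_limit_pos:
  assumes "x > 0" shows "rv_limit x > 0"
proof -
  obtain L where "L \<noteq> 0" "((\<lambda>t. cb (t * x) / cb t) \<longlongrightarrow> L) F"
    using rv assms unfolding regularly_varying_def by blast
  then have "rv_limit x \<noteq> 0" using tendsto_unique[OF F_nontrivial rv_limit_tendsto[OF assms]] by auto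
  moreover have "\<forall>\<^sub>F t in F. 0 \<le> cb (t * x) / cb t"
    using eventually_pos by (rule eventually_mono) (simp add: cb_pos assms less_imp_le)
  then have "rv_limit x \<ge> 0" using F_nontrivial by (intro tendsto_lowerbound[OF rv_limit_tendsto[OF assms]])
  ultimately show ?thesis by simp
qed

lemma rv_limit_mult: assumes "x > 0" "y > 0" shows "rv_limit (x * y) = rv_limit x * rv_limit y"
proof -
  have "((\<lambda>t. cb ((t * x) * y) / cb (t * x)) \<longlongrightarrow> rv_limit y) F"
    using filterlim_compose[OF rv_limit_tendsto[OF assms(2)] scale_filterlim[OF assms(1)]] by simp
  then have "((\<lambda>t. cb ((t * x) * y) / cb (t * x) * (cb (t * x) / cb t)) \<longlongrightarrow> rv_limit y * rv_limit x) F"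
    using rv_limit_tendsto[OF assms(1)] by (intro tendsto_mult)
  moreover have "eventually (\<lambda>t. cb ((t * x) * y) / cb (t * x) * (cb (t * x) / cb t) = cb (t * (x * y)) / cb t) F"
    using eventually_pos
  proof eventually_elim
    case (elim t)
    then have "cb (t * x) > 0" using cb_pos assms by simp
    then show ?case by (simp add: mult.assoc)
  qed
  ultimately have A: "((\<lambda>t. cb (t * (x * y)) / cb t) \<longlongrightarrow> rv_limit y * rv_limit x) F"
    by (rule Lim_transform_eventually)
  have B: "((\<lambda>t. cb (t * (x * y)) / cb t) \<longlongrightarrow> rv_limit (x * y)) F"
    using assms by (intro rv_limit_tendsto) auto
  show ?thesis using tendsto_unique[OF F_nontrivial B A] by (simp add: mult.commute)
qed

context
  fixes ce :: "real \<Rightarrow> real" and \<alpha> :: ereal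
  assumes ce_mono: "mono_on {0..} ce" and ce_nn: "\<And>x. x \<ge> 0 \<Longrightarrow> ce x \<ge> 0"
    and ce_lim: "((\<lambda>x. ereal (ce x / cb x)) \<longlongrightarrow> \<alpha>) F"
begin

lemma ratio_limit_nonneg: "\<alpha> \<ge> 0"
proof -
  have "eventually (\<lambda>t. 0 \<le> ereal (ce t / cb t)) F"
    using eventually_pos
  proof eventually_elim
    case (elim t)
    then have "ce t \<ge> 0" "cb t > 0" using cb_pos ce_nn by auto
    then show ?case by simp
  qed
  then show ?thesis using ce_lim F_nontrivial by (intro tendsto_lowerbound) auto
qed

lemma scaled_cost_tendsto:
  assumes "\<alpha> = ereal a" "x > 0"
  shows "((\<lambda>t. ce (t * x) / cb t) \<longlongrightarrow> a * rv_limit x) F"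
proof -
  have "((\<lambda>t. ce t / cb t) \<longlongrightarrow> a) F" using ce_lim assms by simp
  from filterlim_compose[OF this scale_filterlim[OF assms(2)]]
  have "((\<lambda>t. ce (t * x) / cb (t * x)) \<longlongrightarrow> a) F" by simp
  then have "((\<lambda>t. ce (t * x) / cb (t * x) * (cb (t * x) / cb t)) \<longlongrightarrow> a * rv_limit x) F"
    using rv_limit_tendsto[OF assms(2)] by (intro tendsto_mult)
  moreover have "eventually (\<lambda>t. ce (t * x) / cb (t * x) * (cb (t * x) / cb t) = ce (t * x) / cb t) F"
    using eventually_pos
  proof eventually_elim
    case (elim t)
    then have "cb (t * x) > 0" using cb_pos assms by simp
    then show ?case by simp
  qed
  ultimately show ?thesis by (rule Lim_transform_eventually)
qed

lemma scaled_cost_eventually_ge: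
  assumes "\<alpha> = \<infinity>" "x > 0"
  shows "\<forall>\<^sub>F t in F. K * cb t \<le> ce (t * x)"
proof -
  have "rv_limit x > 0" using rv_limit_pos[OF assms(2)] .
  define K' where "K' = 2 * max K 0 / rv_limit x"
  have "\<forall>\<^sub>F t in F. ereal K' < ereal (ce t / cb t)"
    using ce_lim assms by (intro order_tendstoD(1)) auto
  from eventually_compose_filterlim[OF this scale_filterlim[OF assms(2)]]
  have "\<forall>\<^sub>F t in F. K' < ce (t * x) / cb (t * x)" by simp
  moreover have "\<forall>\<^sub>F t in F. rv_limit x / 2 < cb (t * x) / cb t"
    using rv_limit_tendsto[OF assms(2)] \<open>rv_limit x > 0\<close> by (intro order_tendstoD(1)) auto
  ultimately show ?thesis using eventually_pos
  proof eventually_elim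
    case (elim t)
    then have "cb t > 0" "cb (t * x) > 0" using cb_pos assms by auto
    have "K' \<ge> 0" using \<open>rv_limit x > 0\<close> by (simp add: K'_def)
    have "K * cb t \<le> max K 0 * cb t" using \<open>cb t > 0\<close> by (intro mult_right_mono) auto
    also have "\<dots> = K' * (rv_limit x / 2 * cb t)" using \<open>rv_limit x > 0\<close> by (simp add: K'_def)
    also have "\<dots> \<le> K' * cb (t * x)"
      using elim \<open>cb t > 0\<close> \<open>K' \<ge> 0\<close> by (intro mult_left_mono) (auto simp: pos_less_divide_eq less_imp_le)
    also have "\<dots> \<le> ce (t * x)"
      using elim \<open>cb (t * x) > 0\<close> by (simp add: pos_less_divide_eq less_imp_le)
    finally show ?case .
  qed
qed

text \<open>The benchmark itself need not be monotone; monotonicity of the limit is inherited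
  from a cost whose ratio to the benchmark has a finite positive limit.\<close>

lemma rv_limit_mono:
  assumes "\<alpha> = ereal a" "a > 0" "0 < x" "x \<le> y"
  shows "rv_limit x \<le> rv_limit y"
proof -
  have "eventually (\<lambda>t. ce (t * x) / cb t \<le> ce (t * y) / cb t) F"
    using eventually_pos
  proof eventually_elim
    case (elim t)
    have "t * x \<le> t * y" using assms elim by (intro mult_left_mono) auto
    moreover have "t * x \<ge> 0" using assms elim by simp
    ultimately have "ce (t * x) \<le> ce (t * y)"
      by (intro mono_onD[OF ce_mono]) auto
    moreover have "cb t > 0" using cb_pos elim by simp
    ultimately show ?case by (intro divide_right_mono) auto
  qed
  moreover have "0 < y" using assms by simp
  ultimately have "a * rv_limit x \<le> a * rv_limit y"
    using tendsto_le[OF _ scaled_cost_tendsto[OF assms(1), of y] scaled_cost_tendsto[OF assms(1) assms(3)]] F_nontrivial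
    by (simp add: trivial_limit_def)
  then show ?thesis using assms by simp
qed

lemma rv_limit_eq_powr:
  assumes "\<alpha> = ereal a" "a > 0"
  obtains \<rho> where "\<rho> \<ge> 0" "\<And>x. x > 0 \<Longrightarrow> rv_limit x = x powr \<rho>"
  using mono_multiplicative_eq_powr[of rv_limit, OF rv_limit_pos rv_limit_mono[OF assms] rv_limit_mult] by blast

end

end

section \<open>Routing games\<close>

locale routing_game =
  fixes E :: "'e set" and src tgt :: "'e \<Rightarrow> 'v" and I :: "'i set"
    and orig dest :: "'i \<Rightarrow> 'v" and P :: "'i \<Rightarrow> 'e list set"
    and c :: "'e \<Rightarrow> real \<Rightarrow> real"
  assumes net: "routing_network E src tgt I orig dest P"
    and costs: "admissible_costs E c"
begin

lemma finite_edges: "finite E" using net by (simp add: routing_network_def)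
lemma finite_od_pairs: "finite I" using net by (simp add: routing_network_def)
lemma finite_paths: "i \<in> I \<Longrightarrow> finite (P i)" using net by (simp add: routing_network_def)
lemma paths_nonempty: "i \<in> I \<Longrightarrow> P i \<noteq> {}" using net by (simp add: routing_network_def)
lemma path_edges: "i \<in> I \<Longrightarrow> p \<in> P i \<Longrightarrow> set p \<subseteq> E"
  using net by (auto simp: routing_network_def is_path_def)
lemma paths_disjoint: "i \<in> I \<Longrightarrow> j \<in> I \<Longrightarrow> i \<noteq> j \<Longrightarrow> P i \<inter> P j = {}"
  using net by (simp add: routing_network_def)
lemma od_pair_unique: "i \<in> I \<Longrightarrow> j \<in> I \<Longrightarrow> p \<in> P i \<Longrightarrow> p \<in> P j \<Longrightarrow> i = j"
  using paths_disjoint by blast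
lemma mem_all_paths: "p \<in> all_paths I P \<longleftrightarrow> (\<exists>i\<in>I. p \<in> P i)"
  by (simp add: all_paths_def)
lemma finite_all_paths: "finite (all_paths I P)"
  unfolding all_paths_def using finite_od_pairs finite_paths by auto
lemma all_paths_edges: "p \<in> all_paths I P \<Longrightarrow> set p \<subseteq> E"
  using path_edges by (auto simp: mem_all_paths)
lemma sum_all_paths: "sum g (all_paths I P) = (\<Sum>i\<in>I. \<Sum>p\<in>P i. g p)"
  unfolding all_paths_def using finite_od_pairs finite_paths paths_disjoint by (intro sum.UNION_disjoint) auto

lemma feasible_nonneg: "feasible I P d f \<Longrightarrow> p \<in> all_paths I P \<Longrightarrow> f p \<ge> 0"
  by (simp add: feasible_def)

lemma load_nonneg: "feasible I P d f \<Longrightarrow> load I P f e \<ge> 0"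
  unfolding load_def by (intro sum_nonneg) (auto simp: feasible_def)

lemma load_le_demand: assumes "feasible I P d f" shows "load I P f e \<le> sum d I"
proof -
  have "load I P f e \<le> sum f (all_paths I P)"
    unfolding load_def using assms finite_all_paths by (intro sum_mono2) (auto simp: feasible_def)
  also have "\<dots> = sum d I" using assms by (simp add: sum_all_paths feasible_def)
  finally show ?thesis .
qed

lemma cost_nonneg: "e \<in> E \<Longrightarrow> x \<ge> 0 \<Longrightarrow> c e x \<ge> 0"
  using costs by (simp add: admissible_costs_def)
lemma cost_mono: "e \<in> E \<Longrightarrow> 0 \<le> x \<Longrightarrow> x \<le> y \<Longrightarrow> c e x \<le> c e y"
  using costs unfolding admissible_costs_def by (meson atLeast_iff mono_onD order_trans)
lemma cost_mono_on: "e \<in> E \<Longrightarrow> mono_on {0..} (c e)"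
  using costs unfolding admissible_costs_def by blast
lemma load_cost_mono: "e \<in> E \<Longrightarrow> 0 \<le> x \<Longrightarrow> x \<le> y \<Longrightarrow> x * c e x \<le> y * c e y"
  using cost_mono[of e x y] cost_nonneg[of e x] by (intro mult_mono) auto

lemma load_cost_nonneg: "feasible I P d f \<Longrightarrow> e \<in> E \<Longrightarrow> 0 \<le> load I P f e * c e (load I P f e)"
  using load_nonneg cost_nonneg by auto
lemma social_cost_nonneg: "feasible I P d f \<Longrightarrow> 0 \<le> social_cost E c (load I P f)"
  unfolding social_cost_def using load_cost_nonneg by (intro sum_nonneg) auto
lemma load_cost_le_social_cost: "feasible I P d f \<Longrightarrow> e \<in> E \<Longrightarrow> load I P f e * c e (load I P f e) \<le> social_cost E c (load I P f)"
  unfolding social_cost_def using load_cost_nonneg finite_edges by (intro member_le_sum) auto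

lemma sum_paths_eq_sum_edges: "(\<Sum>p\<in>all_paths I P. f p * path_cost c I P g p) = (\<Sum>e\<in>E. load I P f e * c e (load I P g e))"
proof -
  have "(\<Sum>p\<in>all_paths I P. f p * path_cost c I P g p)
      = (\<Sum>p\<in>all_paths I P. \<Sum>e\<in>E. if e \<in> set p then f p * c e (load I P g e) else 0)"
  proof (rule sum.cong)
    fix p assume p: "p \<in> all_paths I P"
    have "f p * path_cost c I P g p = (\<Sum>e\<in>set p. f p * c e (load I P g e))"
      by (simp add: path_cost_def sum_distrib_left)
    also have "\<dots> = (\<Sum>e\<in>E \<inter> set p. f p * c e (load I P g e))"
      using all_paths_edges[OF p] by (simp add: Int_absorb1)
    also have "\<dots> = (\<Sum>e\<in>E. if e \<in> set p then f p * c e (load I P g e) else 0)"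
      using finite_edges by (simp add: sum.inter_restrict)
    finally show "f p * path_cost c I P g p = (\<Sum>e\<in>E. if e \<in> set p then f p * c e (load I P g e) else 0)" .
  qed simp
  also have "\<dots> = (\<Sum>e\<in>E. \<Sum>p\<in>all_paths I P. if e \<in> set p then f p * c e (load I P g e) else 0)"
    by (rule sum.swap)
  also have "\<dots> = (\<Sum>e\<in>E. load I P f e * c e (load I P g e))"
  proof (rule sum.cong)
    fix e assume "e \<in> E"
    have "load I P f e * c e (load I P g e) = (\<Sum>p\<in>{p \<in> all_paths I P. e \<in> set p}. f p * c e (load I P g e))"
      by (simp add: load_def sum_distrib_right)
    also have "\<dots> = (\<Sum>p\<in>all_paths I P. if e \<in> set p then f p * c e (load I P g e) else 0)"
      using finite_all_paths by (simp add: sum.inter_filter)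
    finally show "(\<Sum>p\<in>all_paths I P. if e \<in> set p then f p * c e (load I P g e) else 0) = load I P f e * c e (load I P g e)" by simp
  qed simp
  finally show ?thesis .
qed

lemma wardrop_od_pair_cost_le:
  assumes w: "wardrop c I P d g" and f: "feasible I P d f" and i: "i \<in> I"
  shows "(\<Sum>p\<in>P i. g p * path_cost c I P g p) \<le> (\<Sum>p\<in>P i. f p * path_cost c I P g p)"
proof -
  have g: "feasible I P d g" using w by (simp add: wardrop_def)
  define D where "D = Min (path_cost c I P g ` P i)"
  have D_le: "D \<le> path_cost c I P g p" if "p \<in> P i" for p
    using finite_paths[OF i] that by (simp add: D_def)
  have "D \<in> path_cost c I P g ` P i" using finite_paths[OF i] paths_nonempty[OF i] by (simp add: D_def)
  then obtain p0 where p0: "p0 \<in> P i" "path_cost c I P g p0 = D" by auto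
  have in_all: "p \<in> all_paths I P" if "p \<in> P i" for p using that i by (auto simp: mem_all_paths)
  have "(\<Sum>p\<in>P i. g p * path_cost c I P g p) = (\<Sum>p\<in>P i. g p * D)"
  proof (rule sum.cong)
    fix p assume p: "p \<in> P i"
    show "g p * path_cost c I P g p = g p * D"
    proof (cases "g p > 0")
      case True
      then have "path_cost c I P g p \<le> path_cost c I P g p0" using w p p0 i by (auto simp: wardrop_def)
      then show ?thesis using D_le[OF p] p0 by simp
    next
      case False
      then show ?thesis using feasible_nonneg[OF g in_all[OF p]] by simp
    qed
  qed simp
  also have "\<dots> = d i * D" using g i by (simp add: feasible_def sum_distrib_right[symmetric])
  also have "\<dots> = (\<Sum>p\<in>P i. f p * D)" using f i by (simp add: feasible_def sum_distrib_right[symmetric])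
  also have "\<dots> \<le> (\<Sum>p\<in>P i. f p * path_cost c I P g p)"
    using D_le feasible_nonneg[OF f] in_all by (intro sum_mono mult_left_mono) auto
  finally show ?thesis .
qed

lemma wardrop_variational_inequality:
  assumes w: "wardrop c I P d g" and f: "feasible I P d f"
  shows "social_cost E c (load I P g) \<le> (\<Sum>e\<in>E. load I P f e * c e (load I P g e))"
proof -
  have "social_cost E c (load I P g) = (\<Sum>i\<in>I. \<Sum>p\<in>P i. g p * path_cost c I P g p)"
    by (simp add: sum_paths_eq_sum_edges[symmetric] social_cost_def sum_all_paths)
  also have "\<dots> \<le> (\<Sum>i\<in>I. \<Sum>p\<in>P i. f p * path_cost c I P g p)"
    using wardrop_od_pair_cost_le[OF w f] by (rule sum_mono)
  also have "\<dots> = (\<Sum>e\<in>E. load I P f e * c e (load I P g e))"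
    by (simp add: sum_paths_eq_sum_edges[symmetric] sum_all_paths)
  finally show ?thesis .
qed

lemma opt_cost_le: "feasible I P d f \<Longrightarrow> opt_cost E c I P d \<le> social_cost E c (load I P f)"
  unfolding opt_cost_def
  by (rule cInf_lower) (auto intro!: bdd_belowI[of _ 0] social_cost_nonneg)

lemma opt_cost_ge: "feasible I P d f0 \<Longrightarrow> (\<And>f. feasible I P d f \<Longrightarrow> L \<le> social_cost E c (load I P f))
   \<Longrightarrow> L \<le> opt_cost E c I P d"
  unfolding opt_cost_def by (rule cInf_greatest) auto

lemma opt_cost_approx:
  assumes "feasible I P d f0" "z > opt_cost E c I P d"
  obtains f where "feasible I P d f" "social_cost E c (load I P f) < z"
proof -
  have "{social_cost E c (load I P f) |f. feasible I P d f} \<noteq> {}" using assms(1) by auto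
  from cInf_lessD[OF this] assms(2) show ?thesis using that unfolding opt_cost_def by auto
qed

lemma opt_cost_ge_heavy_edges:
  assumes f0: "feasible I P d f0" and i: "i \<in> I" and "y \<ge> 0" "real (card (P i)) * y \<le> d i" "\<kappa> \<ge> 0"
    and heavy: "\<And>p. p \<in> P i \<Longrightarrow> \<exists>e\<in>set p. \<kappa> \<le> c e y"
  shows "y * \<kappa> \<le> opt_cost E c I P d"
proof (rule opt_cost_ge[OF f0])
  fix f assume f: "feasible I P d f"
  obtain p where p: "p \<in> P i" "y \<le> f p"
  proof (rule ccontr)
    assume "\<not> thesis"
    then have "\<forall>p\<in>P i. f p < y" using that by force
    then have "(\<Sum>p\<in>P i. f p) < (\<Sum>p\<in>P i. y)"
      using finite_paths[OF i] paths_nonempty[OF i] by (intro sum_strict_mono) auto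
    then show False using f i assms(4) by (simp add: feasible_def)
  qed
  obtain e where e: "e \<in> set p" "\<kappa> \<le> c e y" using heavy[OF p(1)] by blast
  have "e \<in> E" using path_edges[OF i p(1)] e(1) by auto
  have "p \<in> all_paths I P" using p(1) i by (auto simp: mem_all_paths)
  then have "f p \<le> load I P f e"
    unfolding load_def using e(1) finite_all_paths feasible_nonneg[OF f] by (intro member_le_sum) auto
  with p have y: "y \<le> load I P f e" by linarith
  then have "y * \<kappa> \<le> load I P f e * c e (load I P f e)"
    using e(2) cost_mono[OF \<open>e \<in> E\<close> \<open>y \<ge> 0\<close> y] assms(3,5) by (intro mult_mono) auto
  also have "\<dots> \<le> social_cost E c (load I P f)" by (rule load_cost_le_social_cost[OF f \<open>e \<in> E\<close>])
  finally show "y * \<kappa> \<le> social_cost E c (load I P f)" .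
qed

lemma blocked_edge_load_small:
  assumes f: "feasible I P d f" and "M > 0" "k > 0" "\<delta> > 0" "C \<ge> 0"
    and cost: "social_cost E c (load I P f) \<le> (C+1) * (M * k)"
    and large: "c e (M * \<delta>) \<ge> (C+2)/\<delta> * k" and e: "e \<in> E"
  shows "load I P f e \<le> M * \<delta>"
proof (rule ccontr)
  assume "\<not> load I P f e \<le> M * \<delta>"
  then have gt: "M * \<delta> < load I P f e" by simp
  have "c e (M * \<delta>) \<le> c e (load I P f e)" using gt assms by (intro cost_mono[OF e]) auto
  then have "(M * \<delta>) * ((C+2)/\<delta> * k) \<le> load I P f e * c e (load I P f e)"
    using gt large assms load_nonneg[OF f] by (intro mult_mono) auto
  also have "\<dots> \<le> social_cost E c (load I P f)" by (rule load_cost_le_social_cost[OF f e])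
  also have "(M * \<delta>) * ((C+2)/\<delta> * k) = (C+1) * (M * k) + M * k" using assms by (simp add: field_simps)
  finally show False using cost \<open>M > 0\<close> \<open>k > 0\<close> by (smt (verit) mult_pos_pos)
qed

end

section \<open>Rerouting flow away from edges with \<open>\<alpha>\<^sub>e = \<infinity>\<close>\<close>

locale rerouting = routing_game +
  fixes \<alpha> :: "'e \<Rightarrow> ereal" and q :: "'i \<Rightarrow> 'e list"
  assumes q_path: "\<And>i. i \<in> I \<Longrightarrow> q i \<in> P i"
    and q_finite: "\<And>i e. i \<in> I \<Longrightarrow> e \<in> set (q i) \<Longrightarrow> \<alpha> e \<noteq> \<infinity>"
begin

definition blocked :: "'e list \<Rightarrow> bool" where "blocked p \<longleftrightarrow> (\<exists>e\<in>set p. \<alpha> e = \<infinity>)"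
definition blocked_flow :: "('e list \<Rightarrow> real) \<Rightarrow> 'i \<Rightarrow> real" where
  "blocked_flow f i = (\<Sum>p\<in>{p\<in>P i. blocked p}. f p)"
definition reroute :: "('e list \<Rightarrow> real) \<Rightarrow> 'e list \<Rightarrow> real" where
  "reroute f p = (if blocked p then 0 else f p) + (\<Sum>i\<in>I. if p = q i then blocked_flow f i else 0)"

lemma q_not_blocked: "i \<in> I \<Longrightarrow> \<not> blocked (q i)" using q_finite by (auto simp: blocked_def)

lemma blocked_flow_nonneg: assumes "feasible I P d f" "i \<in> I" shows "blocked_flow f i \<ge> 0"
  unfolding blocked_flow_def
proof (intro sum_nonneg)
  fix p assume "p \<in> {p \<in> P i. blocked p}"
  then have "p \<in> all_paths I P" using assms(2) by (auto simp: mem_all_paths)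
  then show "f p \<ge> 0" using feasible_nonneg[OF assms(1)] by blast
qed

lemma sum_reroute_extra: "j \<in> I \<Longrightarrow> (\<Sum>p\<in>P j. \<Sum>i\<in>I. if p = q i then r i else 0) = r j"
proof -
  assume j: "j \<in> I"
  have "(\<Sum>p\<in>P j. \<Sum>i\<in>I. if p = q i then r i else 0) = (\<Sum>i\<in>I. \<Sum>p\<in>P j. if p = q i then r i else 0)"
    by (rule sum.swap)
  also have "\<dots> = (\<Sum>i\<in>I. if i = j then r i else 0)"
  proof (rule sum.cong)
    fix i assume i: "i \<in> I"
    have "(\<Sum>p\<in>P j. if p = q i then r i else 0) = (if q i \<in> P j then r i else 0)"
      using finite_paths[OF j] by (simp add: sum.delta')
    also have "\<dots> = (if i = j then r i else 0)" using od_pair_unique[OF i j q_path[OF i]] q_path[OF j] by auto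
    finally show "(\<Sum>p\<in>P j. if p = q i then r i else 0) = (if i = j then r i else 0)" .
  qed simp
  also have "\<dots> = r j" using j finite_od_pairs by (simp add: sum.delta')
  finally show ?thesis .
qed

lemma reroute_feasible:
  assumes f: "feasible I P d f"
  shows "feasible I P d (reroute f)"
  unfolding feasible_def
proof safe
  fix p assume p: "p \<in> all_paths I P"
  show "0 \<le> reroute f p" unfolding reroute_def
    using feasible_nonneg[OF f p] blocked_flow_nonneg[OF f] by (intro add_nonneg_nonneg sum_nonneg) auto
next
  fix i assume i: "i \<in> I"
  have "(\<Sum>p\<in>P i. reroute f p) = (\<Sum>p\<in>P i. if blocked p then 0 else f p) + (\<Sum>p\<in>P i. \<Sum>j\<in>I. if p = q j then blocked_flow f j else 0)"
    unfolding reroute_def by (simp add: sum.distrib)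
  also have "(\<Sum>p\<in>P i. \<Sum>j\<in>I. if p = q j then blocked_flow f j else 0) = blocked_flow f i" by (rule sum_reroute_extra[OF i])
  also have "(\<Sum>p\<in>P i. if blocked p then 0 else f p) = (\<Sum>p\<in>P i. f p) - blocked_flow f i"
  proof -
    have "(\<Sum>p\<in>P i. f p) = (\<Sum>p\<in>P i. if blocked p then f p else 0) + (\<Sum>p\<in>P i. if blocked p then 0 else f p)"
      by (simp add: sum.distrib[symmetric] if_distrib cong: if_cong)
    moreover have "(\<Sum>p\<in>P i. if blocked p then f p else 0) = blocked_flow f i"
      unfolding blocked_flow_def using finite_paths[OF i] by (simp add: sum.inter_filter)
    ultimately show ?thesis by simp
  qed
  finally show "(\<Sum>p\<in>P i. reroute f p) = d i" using f i by (simp add: feasible_def)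
qed

lemma load_reroute_infinite:
  assumes "\<alpha> e = \<infinity>"
  shows "load I P (reroute f) e = 0"
  unfolding load_def
proof (rule sum.neutral, safe)
  fix p assume p: "p \<in> all_paths I P" "e \<in> set p"
  then have b: "blocked p" using assms by (auto simp: blocked_def)
  have "p \<noteq> q i" if "i \<in> I" for i using q_not_blocked[OF that] b by auto
  then show "reroute f p = 0" unfolding reroute_def using b by simp
qed

lemma sum_blocked_flow_le:
  assumes f: "feasible I P d f"
  shows "(\<Sum>i\<in>I. blocked_flow f i) \<le> (\<Sum>e\<in>{e\<in>E. \<alpha> e = \<infinity>}. load I P f e)"
proof -
  define Z where "Z = {e\<in>E. \<alpha> e = \<infinity>}"
  have "(\<Sum>i\<in>I. blocked_flow f i) = (\<Sum>i\<in>I. \<Sum>p\<in>P i. if blocked p then f p else 0)"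
    unfolding blocked_flow_def by (rule sum.cong[OF refl]) (simp add: finite_paths sum.inter_filter)
  also have "\<dots> = (\<Sum>p\<in>all_paths I P. if blocked p then f p else 0)" by (rule sum_all_paths[symmetric])
  also have "\<dots> \<le> (\<Sum>p\<in>all_paths I P. \<Sum>e\<in>Z. if e \<in> set p then f p else 0)"
  proof (rule sum_mono)
    fix p assume p: "p \<in> all_paths I P"
    show "(if blocked p then f p else 0) \<le> (\<Sum>e\<in>Z. if e \<in> set p then f p else 0)"
    proof (cases "blocked p")
      case True
      then obtain e where "e \<in> set p" "\<alpha> e = \<infinity>" by (auto simp: blocked_def)
      then have "e \<in> Z" using all_paths_edges[OF p] by (auto simp: Z_def)
      then have "(if e \<in> set p then f p else 0) \<le> (\<Sum>e\<in>Z. if e \<in> set p then f p else 0)"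
        using finite_edges feasible_nonneg[OF f p] by (intro member_le_sum) (auto simp: Z_def)
      then show ?thesis using True \<open>e \<in> set p\<close> by simp
    qed (use feasible_nonneg[OF f p] in \<open>auto intro!: sum_nonneg\<close>)
  qed
  also have "\<dots> = (\<Sum>e\<in>Z. \<Sum>p\<in>all_paths I P. if e \<in> set p then f p else 0)" by (rule sum.swap)
  also have "\<dots> = (\<Sum>e\<in>Z. load I P f e)"
    unfolding load_def by (rule sum.cong[OF refl]) (simp add: finite_all_paths sum.inter_filter)
  finally show ?thesis by (simp add: Z_def)
qed

lemma load_reroute_le:
  assumes f: "feasible I P d f"
  shows "load I P (reroute f) e \<le> load I P f e + (\<Sum>e'\<in>{e'\<in>E. \<alpha> e' = \<infinity>}. load I P f e')"
proof -
  define A where "A = {p \<in> all_paths I P. e \<in> set p}"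
  have "A \<subseteq> all_paths I P" by (auto simp: A_def)
  have "load I P (reroute f) e = (\<Sum>p\<in>A. if blocked p then 0 else f p)
      + (\<Sum>p\<in>A. \<Sum>i\<in>I. if p = q i then blocked_flow f i else 0)"
    unfolding load_def A_def[symmetric] reroute_def by (simp add: sum.distrib)
  also have "(\<Sum>p\<in>A. if blocked p then 0 else f p) \<le> load I P f e"
    unfolding load_def A_def[symmetric] using feasible_nonneg[OF f] \<open>A \<subseteq> _\<close> by (intro sum_mono) auto
  also have "(\<Sum>p\<in>A. \<Sum>i\<in>I. if p = q i then blocked_flow f i else 0)
      \<le> (\<Sum>p\<in>all_paths I P. \<Sum>i\<in>I. if p = q i then blocked_flow f i else 0)"
    using finite_all_paths \<open>A \<subseteq> _\<close> blocked_flow_nonneg[OF f] by (intro sum_mono2 sum_nonneg) auto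
  also have "\<dots> = (\<Sum>i\<in>I. blocked_flow f i)"
    unfolding sum_all_paths using sum_reroute_extra by (intro sum.cong) auto
  also have "\<dots> \<le> (\<Sum>e'\<in>{e'\<in>E. \<alpha> e' = \<infinity>}. load I P f e')" by (rule sum_blocked_flow_le[OF f])
  finally show ?thesis by simp
qed

lemma social_cost_reroute_le:
  assumes f: "feasible I P d f" and M: "M = sum d I" "M > 0" and "k > 0" "\<epsilon> > 0" "\<delta> > 0" "C \<ge> 0"
    and "social_cost E c (load I P f) \<le> (C+1) * (M * k)" "real (card E) * \<delta> \<le> r"
    and large: "\<And>e. e \<in> E \<Longrightarrow> \<alpha> e = \<infinity> \<Longrightarrow> c e (M * \<delta>) \<ge> (C+2)/\<delta> * k"
    and reroute_approx: "\<And>e u v. e \<in> E \<Longrightarrow> \<alpha> e \<noteq> \<infinity> \<Longrightarrow> 0 \<le> u \<Longrightarrow> u \<le> v \<Longrightarrow> v \<le> M \<Longrightarrow>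
        v - u \<le> r * M \<Longrightarrow> v * c e v - u * c e u \<le> \<epsilon> * (M * k)"
  shows "social_cost E c (load I P (reroute f)) \<le> social_cost E c (load I P f) + real (card E) * (\<epsilon> * (M * k))"
proof -
  define x where "x = load I P f"
  define x' where "x' = load I P (reroute f)"
  have f': "feasible I P d (reroute f)" by (rule reroute_feasible[OF f])
  have "(\<Sum>e\<in>{e\<in>E. \<alpha> e = \<infinity>}. x e) \<le> real (card {e\<in>E. \<alpha> e = \<infinity>}) * (M * \<delta>)"
    unfolding x_def using blocked_edge_load_small[OF f] large assms by (intro sum_bounded_above) auto
  also have "\<dots> \<le> real (card E) * (M * \<delta>)"
    using finite_edges assms by (intro mult_right_mono) (auto intro!: card_mono)
  also have "\<dots> \<le> r * M" using assms mult_right_mono[of _ r M] by (simp add: mult.left_commute)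
  finally have shift: "x' e - x e \<le> r * M" for e
    using load_reroute_le[OF f, of e] unfolding x_def x'_def by linarith
  have "social_cost E c x' \<le> (\<Sum>e\<in>E. x e * c e (x e) + \<epsilon> * (M * k))"
    unfolding social_cost_def
  proof (rule sum_mono)
    fix e assume e: "e \<in> E"
    have x: "0 \<le> x e" "0 \<le> x' e" "x' e \<le> M"
      using load_nonneg[OF f] load_nonneg[OF f'] load_le_demand[OF f'] M by (auto simp: x_def x'_def)
    have "0 < \<epsilon> * (M * k)" "0 \<le> x e * c e (x e)" using assms x cost_nonneg[OF e] by auto
    consider "\<alpha> e = \<infinity>" | "x' e \<le> x e" | "\<alpha> e \<noteq> \<infinity>" "x e \<le> x' e" by fastforce
    then show "x' e * c e (x' e) \<le> x e * c e (x e) + \<epsilon> * (M * k)"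
    proof cases
      case 1
      then show ?thesis using load_reroute_infinite[OF 1] \<open>0 < \<epsilon> * (M * k)\<close> \<open>0 \<le> x e * _\<close>
        by (simp add: x'_def)
    next
      case 2
      then show ?thesis using load_cost_mono[OF e x(2) 2] \<open>0 < \<epsilon> * (M * k)\<close> by linarith
    next
      case 3
      then show ?thesis using reroute_approx[OF e 3(1) x(1) 3(2) x(3) shift] by simp
    qed
  qed
  also have "\<dots> = social_cost E c x + real (card E) * (\<epsilon> * (M * k))"
    by (simp add: social_cost_def sum.distrib)
  finally show ?thesis by (simp add: x_def x'_def)
qed

lemma wardrop_social_cost_le_young:
  assumes w: "wardrop c I P d g" and f: "feasible I P d f" and M: "M = sum d I"
    and "\<rho> \<ge> 0" "B > 0" "\<epsilon> > 0"
    and unblocked: "\<And>e. e \<in> E \<Longrightarrow> \<alpha> e = \<infinity> \<Longrightarrow> load I P f e = 0"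
    and young_approx: "\<And>e u w. e \<in> E \<Longrightarrow> \<alpha> e \<noteq> \<infinity> \<Longrightarrow> 0 \<le> u \<Longrightarrow> u \<le> M \<Longrightarrow> 0 \<le> w \<Longrightarrow> w \<le> M \<Longrightarrow>
        u * c e w \<le> (u * c e u + \<rho> * (w * c e w)) / (\<rho>+1) + \<epsilon> * B"
  shows "social_cost E c (load I P g) \<le> social_cost E c (load I P f) + (\<rho>+1) * (real (card E) * (\<epsilon> * B))"
proof -
  define x where "x = load I P f"
  define y where "y = load I P g"
  have g: "feasible I P d g" using w by (simp add: wardrop_def)
  have bounds: "0 \<le> x e" "x e \<le> M" "0 \<le> y e" "y e \<le> M" for e
    using load_nonneg[OF f] load_le_demand[OF f] load_nonneg[OF g] load_le_demand[OF g] M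
    by (auto simp: x_def y_def)
  have "social_cost E c y \<le> (\<Sum>e\<in>E. x e * c e (y e))"
    using wardrop_variational_inequality[OF w f] by (simp add: x_def y_def)
  also have "\<dots> \<le> (\<Sum>e\<in>E. (x e * c e (x e) + \<rho> * (y e * c e (y e))) / (\<rho>+1) + \<epsilon> * B)"
  proof (rule sum_mono)
    fix e assume e: "e \<in> E"
    show "x e * c e (y e) \<le> (x e * c e (x e) + \<rho> * (y e * c e (y e))) / (\<rho>+1) + \<epsilon> * B"
    proof (cases "\<alpha> e = \<infinity>")
      case True
      have "0 \<le> (x e * c e (x e) + \<rho> * (y e * c e (y e))) / (\<rho>+1)"
        using bounds cost_nonneg[OF e] assms by (intro divide_nonneg_pos add_nonneg_nonneg mult_nonneg_nonneg) auto
      then show ?thesis using unblocked[OF e True] assms by (simp add: x_def)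
    next
      case False
      then show ?thesis using young_approx[OF e False] bounds by blast
    qed
  qed
  also have "\<dots> = (social_cost E c x + \<rho> * social_cost E c y) / (\<rho>+1) + real (card E) * (\<epsilon> * B)"
    by (simp add: social_cost_def sum.distrib sum_divide_distrib[symmetric] sum_distrib_left)
  finally show ?thesis using assms unfolding x_def y_def by (simp add: field_simps)
qed

lemma wardrop_social_cost_le_opt:
  assumes w: "wardrop c I P d g" and M: "M = sum d I" "M > 0" and "k > 0"
    and "\<rho> \<ge> 0" "\<epsilon> > 0" "\<epsilon> \<le> 1" "C \<ge> 0" "\<delta> > 0" "real (card E) * \<delta> \<le> r"
    and opt: "opt_cost E c I P d \<le> C * (M * k)"
    and young_approx: "\<And>e u w. e \<in> E \<Longrightarrow> \<alpha> e \<noteq> \<infinity> \<Longrightarrow> 0 \<le> u \<Longrightarrow> u \<le> M \<Longrightarrow> 0 \<le> w \<Longrightarrow> w \<le> M \<Longrightarrow>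
        u * c e w \<le> (u * c e u + \<rho> * (w * c e w)) / (\<rho>+1) + \<epsilon> * (M * k)"
    and reroute_approx: "\<And>e u v. e \<in> E \<Longrightarrow> \<alpha> e \<noteq> \<infinity> \<Longrightarrow> 0 \<le> u \<Longrightarrow> u \<le> v \<Longrightarrow> v \<le> M \<Longrightarrow>
        v - u \<le> r * M \<Longrightarrow> v * c e v - u * c e u \<le> \<epsilon> * (M * k)"
    and large: "\<And>e. e \<in> E \<Longrightarrow> \<alpha> e = \<infinity> \<Longrightarrow> c e (M * \<delta>) \<ge> (C+2)/\<delta> * k"
  shows "social_cost E c (load I P g) \<le>
    opt_cost E c I P d + (1 + real (card E) + (\<rho>+1) * real (card E)) * \<epsilon> * (M * k)"
proof -
  have g: "feasible I P d g" using w by (simp add: wardrop_def)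
  obtain f where f: "feasible I P d f"
    and f_opt: "social_cost E c (load I P f) < opt_cost E c I P d + \<epsilon> * (M * k)"
    using opt_cost_approx[OF g, of "opt_cost E c I P d + \<epsilon> * (M * k)"] assms by auto
  moreover have "\<epsilon> * (M * k) \<le> M * k" using assms by simp
  ultimately have "social_cost E c (load I P f) \<le> (C+1) * (M * k)"
    using opt by (simp add: algebra_simps)
  then have "social_cost E c (load I P (reroute f)) \<le> social_cost E c (load I P f) + real (card E) * (\<epsilon> * (M * k))"
    using assms by (intro social_cost_reroute_le[OF f M]) auto
  moreover have "social_cost E c (load I P g) \<le>
      social_cost E c (load I P (reroute f)) + (\<rho>+1) * (real (card E) * (\<epsilon> * (M * k)))"
    using assms load_reroute_infinite
    by (intro wardrop_social_cost_le_young[OF w reroute_feasible[OF f] M(1)]) auto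
  ultimately show ?thesis using f_opt by (simp add: algebra_simps)
qed

end

section \<open>Sequences of routing games\<close>

definition path_alpha :: "('e \<Rightarrow> ereal) \<Rightarrow> 'e list \<Rightarrow> ereal" where
  "path_alpha \<alpha> p = max 0 (SUP e\<in>set p. \<alpha> e)"

lemma od_alpha_path_alpha: "od_alpha P \<alpha> i = (INF p\<in>P i. path_alpha \<alpha> p)"
  by (simp add: od_alpha_def path_alpha_def)

lemma od_alpha_le_path_alpha: "p \<in> P i \<Longrightarrow> od_alpha P \<alpha> i \<le> path_alpha \<alpha> p"
  unfolding od_alpha_path_alpha by (rule INF_lower)

lemma od_alpha_attained:
  assumes "finite (P i)" "P i \<noteq> {}"
  shows "\<exists>p\<in>P i. path_alpha \<alpha> p = od_alpha P \<alpha> i"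
proof -
  have "od_alpha P \<alpha> i = Min (path_alpha \<alpha> ` P i)"
    unfolding od_alpha_path_alpha using assms by (intro cInf_eq_Min) auto
  moreover have "Min (path_alpha \<alpha> ` P i) \<in> path_alpha \<alpha> ` P i" using assms by (intro Min_in) auto
  ultimately show ?thesis by force
qed

lemma edge_alpha_le_path_alpha: "e \<in> set p \<Longrightarrow> \<alpha> e \<le> path_alpha \<alpha> p"
  unfolding path_alpha_def by (meson SUP_upper max.coboundedI2)

lemma path_alpha_attained:
  assumes "0 < s" "s \<le> path_alpha \<alpha> p"
  shows "\<exists>e\<in>set p. s \<le> \<alpha> e"
proof (cases "set p = {}")
  case True
  then show ?thesis using assms by (simp add: path_alpha_def bot_ereal_def)
next
  case False
  then have "s \<le> Max (\<alpha> ` set p)"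
    using assms by (simp add: path_alpha_def cSup_eq_Max le_max_iff_disj) (meson leD)
  moreover have "Max (\<alpha> ` set p) \<in> \<alpha> ` set p" using False by (intro Max_in) auto
  ultimately show ?thesis by auto
qed

locale poa_sequence =
  fixes E :: "'e set" and src tgt :: "'e \<Rightarrow> 'v" and I :: "'i set"
    and orig dest :: "'i \<Rightarrow> 'v" and P :: "'i \<Rightarrow> 'e list set"
    and c :: "'e \<Rightarrow> real \<Rightarrow> real" and m :: "nat \<Rightarrow> 'i \<Rightarrow> real"
    and F :: "real filter" and cb :: "real \<Rightarrow> real" and \<alpha> :: "'e \<Rightarrow> ereal"
    and feq :: "nat \<Rightarrow> 'e list \<Rightarrow> real"
  assumes net: "routing_network E src tgt I orig dest P"
    and costs: "admissible_costs E c"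
    and M_pos: "\<forall>n. (\<Sum>i\<in>I. m n i) > 0"
    and omega: "F = at_right 0 \<or> F = at_top"
    and M_lim: "filterlim (\<lambda>n. \<Sum>i\<in>I. m n i) F sequentially"
    and bench: "benchmark F E c cb \<alpha>"
    and tight: "0 < (MAX i\<in>I. od_alpha P \<alpha> i)" "(MAX i\<in>I. od_alpha P \<alpha> i) < \<infinity>"
    and salient: "\<forall>i\<in>I. liminf (\<lambda>n. ereal (m n i / (\<Sum>j\<in>I. m n j))) > 0"
    and equilibria: "\<forall>n. wardrop c I P (m n) (feq n)"

sublocale poa_sequence \<subseteq> routing_game E src tgt I orig dest P c
  using net costs by unfold_locales

sublocale poa_sequence \<subseteq> regular_variation F cb
  using omega bench by unfold_locales (auto simp: benchmark_def)

context poa_sequence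
begin

abbreviation M :: "nat \<Rightarrow> real" where "M n \<equiv> \<Sum>i\<in>I. m n i"

definition alpha_max :: real where "alpha_max = real_of_ereal (MAX i\<in>I. od_alpha P \<alpha> i)"

definition best_path :: "'i \<Rightarrow> 'e list" where
  "best_path i = (SOME p. p \<in> P i \<and> path_alpha \<alpha> p = od_alpha P \<alpha> i)"

definition alpha_real :: "'e \<Rightarrow> real" where "alpha_real e = real_of_ereal (\<alpha> e)"

lemma cb_M_pos: "cb (M n) > 0"
  using M_pos cb_pos by blast

lemma alpha_nonneg: "e \<in> E \<Longrightarrow> \<alpha> e \<ge> 0"
  using bench cost_nonneg[of e] unfolding benchmark_def
  by (intro ratio_limit_nonneg[of "c e" "\<alpha> e"] cost_mono_on) auto

lemma alpha_finite: "e \<in> E \<Longrightarrow> \<alpha> e \<noteq> \<infinity> \<Longrightarrow> \<alpha> e = ereal (alpha_real e) \<and> alpha_real e \<ge> 0"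
  using alpha_nonneg[of e] by (cases "\<alpha> e") (auto simp: alpha_real_def)

lemma od_pairs_nonempty: "I \<noteq> {}"
  using M_pos by (metis less_irrefl sum.empty)

lemma alpha_max_ereal: "(MAX i\<in>I. od_alpha P \<alpha> i) = ereal alpha_max"
  using tight by (cases "MAX i\<in>I. od_alpha P \<alpha> i") (auto simp: alpha_max_def)

lemma od_alpha_le_alpha_max: "i \<in> I \<Longrightarrow> od_alpha P \<alpha> i \<le> ereal alpha_max"
  unfolding alpha_max_ereal[symmetric] using finite_od_pairs by (intro Max_ge) auto

lemma alpha_max_attained: "\<exists>i\<in>I. od_alpha P \<alpha> i = ereal alpha_max"
proof -
  have "(MAX i\<in>I. od_alpha P \<alpha> i) \<in> od_alpha P \<alpha> ` I"
    using finite_od_pairs od_pairs_nonempty by (intro Max_in) auto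
  then show ?thesis unfolding alpha_max_ereal by auto
qed

lemma alpha_max_pos: "alpha_max > 0"
  using tight unfolding alpha_max_ereal by simp

lemma
  assumes "i \<in> I" shows best_path_mem: "best_path i \<in> P i"
    and path_alpha_best_path: "path_alpha \<alpha> (best_path i) = od_alpha P \<alpha> i"
proof -
  obtain p where "p \<in> P i" "path_alpha \<alpha> p = od_alpha P \<alpha> i"
    using od_alpha_attained[of P i \<alpha>] finite_paths[OF assms] paths_nonempty[OF assms] by blast
  then have "p \<in> P i \<and> path_alpha \<alpha> p = od_alpha P \<alpha> i" ..
  then have "best_path i \<in> P i \<and> path_alpha \<alpha> (best_path i) = od_alpha P \<alpha> i"
    unfolding best_path_def by (rule someI)
  then show "best_path i \<in> P i" "path_alpha \<alpha> (best_path i) = od_alpha P \<alpha> i" by auto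
qed

lemma best_path_finite:
  assumes "i \<in> I" "e \<in> set (best_path i)" shows "\<alpha> e \<noteq> \<infinity>"
proof -
  have "\<alpha> e \<le> path_alpha \<alpha> (best_path i)" using assms(2) by (rule edge_alpha_le_path_alpha)
  also have "\<dots> = od_alpha P \<alpha> i" using path_alpha_best_path[OF assms(1)] .
  also have "\<dots> \<le> ereal alpha_max" using assms(1) by (rule od_alpha_le_alpha_max)
  finally show ?thesis by auto
qed

end

sublocale poa_sequence \<subseteq> rerouting E src tgt I orig dest P c \<alpha> best_path
  by unfold_locales (simp_all add: best_path_mem best_path_finite)

context poa_sequence
begin

lemma tight_edge: "\<exists>e\<in>E. \<alpha> e = ereal alpha_max"
proof -
  obtain i where i: "i \<in> I" "od_alpha P \<alpha> i = ereal alpha_max" using alpha_max_attained by blast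
  then have p: "best_path i \<in> P i" "path_alpha \<alpha> (best_path i) = ereal alpha_max"
    using best_path_mem[OF i(1)] path_alpha_best_path[OF i(1)] by auto
  then obtain e where e: "e \<in> set (best_path i)" "ereal alpha_max \<le> \<alpha> e"
    using path_alpha_attained[of "ereal alpha_max" \<alpha> "best_path i"] alpha_max_pos by auto
  moreover have "\<alpha> e \<le> ereal alpha_max" using edge_alpha_le_path_alpha[OF e(1), of \<alpha>] p by simp
  moreover have "e \<in> E" using path_edges[OF i(1) p(1)] e by auto
  ultimately show ?thesis by force
qed

lemma cost_ratio_tendsto: "e \<in> E \<Longrightarrow> ((\<lambda>x. ereal (c e x / cb x)) \<longlongrightarrow> \<alpha> e) F"
  using bench by (simp add: benchmark_def)

definition rv_index :: real where "rv_index = (SOME \<rho>. \<rho> \<ge> 0 \<and> (\<forall>x>0. rv_limit x = x powr \<rho>))"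

lemma rv_index: "rv_index \<ge> 0" "x > 0 \<Longrightarrow> rv_limit x = x powr rv_index"
proof -
  obtain e where e: "e \<in> E" "\<alpha> e = ereal alpha_max" using tight_edge by blast
  obtain \<rho> where "\<rho> \<ge> 0" "\<And>x. x > 0 \<Longrightarrow> rv_limit x = x powr \<rho>"
    by (rule rv_limit_eq_powr[OF cost_mono_on[OF e(1)] cost_nonneg[OF e(1)] cost_ratio_tendsto[OF e(1)]
        e(2) alpha_max_pos], assumption, rule that)
  then have "\<exists>\<rho>. \<rho> \<ge> 0 \<and> (\<forall>x>0. rv_limit x = x powr \<rho>)" by auto
  then have "rv_index \<ge> 0 \<and> (\<forall>x>0. rv_limit x = x powr rv_index)"
    unfolding rv_index_def by (rule someI_ex)
  then show "rv_index \<ge> 0" "x > 0 \<Longrightarrow> rv_limit x = x powr rv_index" by auto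
qed

lemma scaled_cost_tendsto_powr:
  assumes "e \<in> E" "\<alpha> e \<noteq> \<infinity>" "s > 0"
  shows "((\<lambda>n. c e (M n * s) / cb (M n)) \<longlongrightarrow> alpha_real e * s powr rv_index) sequentially"
proof -
  have "\<alpha> e = ereal (alpha_real e)" using alpha_finite assms by blast
  from scaled_cost_tendsto[OF cost_mono_on[OF assms(1)] cost_nonneg[OF assms(1)]
      cost_ratio_tendsto[OF assms(1)] this assms(3)]
  have "((\<lambda>t. c e (t * s) / cb t) \<longlongrightarrow> alpha_real e * rv_limit s) F" .
  from filterlim_compose[OF this M_lim] show ?thesis using rv_index(2)[OF assms(3)] by simp
qed

lemma scaled_cost_eventually_large:
  assumes "e \<in> E" "\<alpha> e = \<infinity>" "s > 0"
  shows "\<forall>\<^sub>F n in sequentially. K * cb (M n) \<le> c e (M n * s)"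
  using scaled_cost_eventually_ge[OF cost_mono_on[OF assms(1)] cost_nonneg[OF assms(1)]
      cost_ratio_tendsto[OF assms(1)] assms(2,3)]
  by (rule eventually_compose_filterlim[OF _ M_lim])

lemma scaled_cost_mono:
  assumes "e \<in> E" shows "mono_on {0..} (\<lambda>s. c e (M n * s) / cb (M n))"
proof (rule mono_onI)
  fix r s :: real assume "r \<in> {0..}" "s \<in> {0..}" "r \<le> s"
  then have "c e (M n * r) \<le> c e (M n * s)"
    using M_pos[rule_format, of n] by (intro cost_mono[OF assms] mult_left_mono mult_nonneg_nonneg) auto
  then show "c e (M n * r) / cb (M n) \<le> c e (M n * s) / cb (M n)"
    using cb_M_pos[of n] by (intro divide_right_mono) auto
qed

lemma scaled_cost_nonneg: "e \<in> E \<Longrightarrow> s \<ge> 0 \<Longrightarrow> c e (M n * s) / cb (M n) \<ge> 0"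
  using M_pos cb_M_pos[of n] cost_nonneg[of e "M n * s"] by (simp add: less_imp_le)

lemma scaled_cost_uniform:
  assumes "e \<in> E" "\<alpha> e \<noteq> \<infinity>" "0 < \<delta>" "\<delta> < 1" "\<eta> > 0"
  shows "\<forall>\<^sub>F n in sequentially. \<forall>s\<in>{\<delta>..1}. \<bar>c e (M n * s) / cb (M n) - alpha_real e * s powr rv_index\<bar> \<le> \<eta>"
proof (rule mono_on_tendsto_uniformly[OF assms(3,4) _ _ _ assms(5)])
  show "continuous_on {\<delta>..1} (\<lambda>s. alpha_real e * s powr rv_index)"
    using assms(3) by (intro continuous_intros) auto
  show "((\<lambda>n. c e (M n * s) / cb (M n)) \<longlongrightarrow> alpha_real e * s powr rv_index) sequentially" if "s \<in> {\<delta>..1}" for s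
    using that assms(3) by (intro scaled_cost_tendsto_powr[OF assms(1,2)]) simp
  have "mono_on {\<delta>..1} (\<lambda>s. c e (M n * s) / cb (M n))" for n
    using assms(3) by (intro mono_on_subset[OF scaled_cost_mono[OF assms(1)]]) auto
  then show "\<forall>\<^sub>F n in sequentially. mono_on {\<delta>..1} (\<lambda>s. c e (M n * s) / cb (M n))"
    by simp
qed

lemma eventually_young_bound_edge:
  assumes "\<epsilon> > 0" "e \<in> E" "\<alpha> e \<noteq> \<infinity>"
  shows "\<forall>\<^sub>F n in sequentially. \<forall>u w. 0 \<le> u \<longrightarrow> u \<le> M n \<longrightarrow> 0 \<le> w \<longrightarrow> w \<le> M n \<longrightarrow>
    u * c e w \<le> (u * c e u + rv_index * (w * c e w)) / (rv_index+1) + \<epsilon> * (M n * cb (M n))"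
proof -
  obtain \<delta> \<eta> where \<delta>\<eta>: "0 < \<delta>" "\<delta> < 1" "0 < \<eta>" "young_approx (alpha_real e) rv_index \<epsilon> \<delta> \<eta>"
    using young_approx_exists[OF assms(1), of "alpha_real e" rv_index] alpha_finite[OF assms(2,3)] rv_index(1) by blast
  from scaled_cost_uniform[OF assms(2,3) \<delta>\<eta>(1-3)] show ?thesis
  proof eventually_elim
    case (elim n)
    have "mono_on {0..1} (\<lambda>s. c e (M n * s) / cb (M n))"
      by (intro mono_on_subset[OF scaled_cost_mono[OF assms(2)]]) auto
    moreover have "\<forall>s\<in>{0..1}. c e (M n * s) / cb (M n) \<ge> 0"
      using scaled_cost_nonneg[OF assms(2)] by simp
    ultimately show ?case
      using young_approx_rescale[OF \<delta>\<eta>(4) M_pos[rule_format] cb_M_pos rv_index(1) _ _ elim] by blast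
  qed
qed

lemma eventually_reroute_bound_edge:
  assumes "\<epsilon> > 0" "e \<in> E" "\<alpha> e \<noteq> \<infinity>"
  shows "\<exists>r>0. \<forall>\<^sub>F n in sequentially. \<forall>u v. 0 \<le> u \<longrightarrow> u \<le> v \<longrightarrow> v \<le> M n \<longrightarrow> v - u \<le> r * M n \<longrightarrow>
    v * c e v - u * c e u \<le> \<epsilon> * (M n * cb (M n))"
proof -
  obtain \<delta> \<eta> r where \<delta>\<eta>: "0 < \<delta>" "\<delta> < 1" "0 < \<eta>" "0 < r" "reroute_approx (alpha_real e) rv_index \<epsilon> \<delta> \<eta> r"
    using reroute_approx_exists[OF assms(1), of "alpha_real e" rv_index] alpha_finite[OF assms(2,3)] rv_index(1) by blast
  from scaled_cost_uniform[OF assms(2,3) \<delta>\<eta>(1-3)]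
  have "\<forall>\<^sub>F n in sequentially. \<forall>u v. 0 \<le> u \<longrightarrow> u \<le> v \<longrightarrow> v \<le> M n \<longrightarrow> v - u \<le> r * M n \<longrightarrow>
    v * c e v - u * c e u \<le> \<epsilon> * (M n * cb (M n))"
  proof eventually_elim
    case (elim n)
    have "mono_on {0..1} (\<lambda>s. c e (M n * s) / cb (M n))"
      by (intro mono_on_subset[OF scaled_cost_mono[OF assms(2)]]) auto
    moreover have "\<forall>s\<in>{0..1}. c e (M n * s) / cb (M n) \<ge> 0"
      using scaled_cost_nonneg[OF assms(2)] by simp
    ultimately show ?case
      using reroute_approx_rescale[OF \<delta>\<eta>(5) M_pos[rule_format] cb_M_pos _ _ elim] by blast
  qed
  with \<delta>\<eta>(4) show ?thesis by blast
qed

lemma eventually_young_bound: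
  assumes "\<epsilon> > 0"
  shows "\<forall>\<^sub>F n in sequentially. \<forall>e\<in>E. \<alpha> e \<noteq> \<infinity> \<longrightarrow> (\<forall>u w. 0 \<le> u \<longrightarrow> u \<le> M n \<longrightarrow> 0 \<le> w \<longrightarrow> w \<le> M n \<longrightarrow>
    u * c e w \<le> (u * c e u + rv_index * (w * c e w)) / (rv_index+1) + \<epsilon> * (M n * cb (M n)))"
  using eventually_young_bound_edge[OF assms] by (intro eventually_ball_finite[OF finite_edges]) auto

lemma eventually_reroute_bound:
  assumes "\<epsilon> > 0"
  shows "\<exists>r>0. \<forall>\<^sub>F n in sequentially. \<forall>e\<in>{e\<in>E. \<alpha> e \<noteq> \<infinity>}. \<forall>u v. 0 \<le> u \<longrightarrow> u \<le> v \<longrightarrow>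
    v \<le> M n \<longrightarrow> v - u \<le> r * M n \<longrightarrow> v * c e v - u * c e u \<le> \<epsilon> * (M n * cb (M n))"
proof (rule eventually_ball_finite_ex_pos)
  fix e r r' n
  assume "r' \<le> r" and bound: "\<forall>u v. 0 \<le> u \<longrightarrow> u \<le> v \<longrightarrow> v \<le> M n \<longrightarrow> v - u \<le> r * M n \<longrightarrow>
    v * c e v - u * c e u \<le> \<epsilon> * (M n * cb (M n))"
  have "r' * M n \<le> r * M n" using \<open>r' \<le> r\<close> M_pos by (intro mult_right_mono) (auto intro: less_imp_le)
  with bound show "\<forall>u v. 0 \<le> u \<longrightarrow> u \<le> v \<longrightarrow> v \<le> M n \<longrightarrow> v - u \<le> r' * M n \<longrightarrow>
    v * c e v - u * c e u \<le> \<epsilon> * (M n * cb (M n))" by force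
qed (use finite_edges eventually_reroute_bound_edge[OF assms] in auto)

lemma eventually_infinite_edges_costly:
  assumes "\<delta> > 0"
  shows "\<forall>\<^sub>F n in sequentially. \<forall>e\<in>E. \<alpha> e = \<infinity> \<longrightarrow> K * cb (M n) \<le> c e (M n * \<delta>)"
proof (intro eventually_ball_finite[OF finite_edges] ballI)
  fix e assume "e \<in> E"
  then show "\<forall>\<^sub>F n in sequentially. \<alpha> e = \<infinity> \<longrightarrow> K * cb (M n) \<le> c e (M n * \<delta>)"
    using scaled_cost_eventually_large[OF _ _ assms, of e K] by (cases "\<alpha> e = \<infinity>") auto
qed

lemma feq_feasible: "feasible I P (m n) (feq n)"
  using equilibria by (simp add: wardrop_def)

lemma opt_cost_upper: "\<exists>C\<ge>0. \<forall>\<^sub>F n in sequentially. opt_cost E c I P (m n) \<le> C * (M n * cb (M n))"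
proof -
  define C where "C = (\<Sum>e\<in>E. if \<alpha> e = \<infinity> then 0 else alpha_real e + 1)"
  have "\<forall>\<^sub>F n in sequentially. \<forall>e\<in>E. \<alpha> e \<noteq> \<infinity> \<longrightarrow> c e (M n * 1) / cb (M n) < alpha_real e + 1"
  proof (intro eventually_ball_finite[OF finite_edges] ballI)
    fix e assume "e \<in> E"
    show "\<forall>\<^sub>F n in sequentially. \<alpha> e \<noteq> \<infinity> \<longrightarrow> c e (M n * 1) / cb (M n) < alpha_real e + 1"
    proof (cases "\<alpha> e = \<infinity>")
      case False
      then show ?thesis
        using order_tendstoD(2)[OF scaled_cost_tendsto_powr[OF \<open>e \<in> E\<close> False, of 1], of "alpha_real e + 1"] by simp
    qed simp
  qed
  then have "\<forall>\<^sub>F n in sequentially. opt_cost E c I P (m n) \<le> C * (M n * cb (M n))"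
  proof eventually_elim
    case (elim n)
    let ?x = "load I P (reroute (feq n))"
    have f: "feasible I P (m n) (reroute (feq n))" by (rule reroute_feasible[OF feq_feasible])
    have "?x e * c e (?x e) \<le> (if \<alpha> e = \<infinity> then 0 else alpha_real e + 1) * (M n * cb (M n))" if e: "e \<in> E" for e
    proof (cases "\<alpha> e = \<infinity>")
      case True
      then show ?thesis by (simp add: load_reroute_infinite)
    next
      case False
      have "?x e * c e (?x e) \<le> M n * c e (M n)"
        using load_nonneg[OF f] load_le_demand[OF f] by (intro load_cost_mono[OF e]) auto
      also have "\<dots> \<le> M n * ((alpha_real e + 1) * cb (M n))"
        using elim e False cb_M_pos[of n] M_pos
        by (intro mult_left_mono) (auto simp: pos_divide_less_eq less_imp_le)
      finally show ?thesis using False by (simp add: algebra_simps)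
    qed
    then have "social_cost E c ?x \<le> C * (M n * cb (M n))"
      unfolding social_cost_def C_def sum_distrib_right by (rule sum_mono)
    then show ?case using opt_cost_le[OF f] by linarith
  qed
  moreover have "C \<ge> 0" unfolding C_def using alpha_finite by (intro sum_nonneg) auto
  ultimately show ?thesis by blast
qed

lemma salient_eventually:
  assumes "i \<in> I" shows "\<exists>\<mu>>0. \<forall>\<^sub>F n in sequentially. \<mu> * M n < m n i"
proof -
  obtain z where z: "0 < z" "z < liminf (\<lambda>n. ereal (m n i / M n))"
    using salient assms dense by blast
  then obtain \<mu> where \<mu>: "z = ereal \<mu>" "\<mu> > 0" by (cases z) auto
  have "\<forall>\<^sub>F n in sequentially. \<mu> < m n i / M n" using less_LiminfD[OF z(2)] \<mu>(1) by simp
  then have "\<forall>\<^sub>F n in sequentially. \<mu> * M n < m n i"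
    by (rule eventually_mono) (use M_pos in \<open>simp add: pos_less_divide_eq\<close>)
  with \<mu>(2) show ?thesis by blast
qed

lemma heavy_edge_cost_large:
  assumes "\<beta> > 0"
  shows "\<forall>\<^sub>F n in sequentially. \<forall>e\<in>E. ereal alpha_max \<le> \<alpha> e \<longrightarrow>
    alpha_max * \<beta> powr rv_index / 2 * cb (M n) \<le> c e (M n * \<beta>)"
proof (intro eventually_ball_finite[OF finite_edges] ballI)
  fix e assume e: "e \<in> E"
  show "\<forall>\<^sub>F n in sequentially. ereal alpha_max \<le> \<alpha> e \<longrightarrow>
    alpha_max * \<beta> powr rv_index / 2 * cb (M n) \<le> c e (M n * \<beta>)"
  proof (cases "\<alpha> e = \<infinity>")
    case True
    then show ?thesis
      using scaled_cost_eventually_large[OF e True assms, of "alpha_max * \<beta> powr rv_index / 2"] by simp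
  next
    case False
    show ?thesis
    proof (cases "ereal alpha_max \<le> \<alpha> e")
      case True
      then have "alpha_max * \<beta> powr rv_index / 2 < alpha_real e * \<beta> powr rv_index"
        using alpha_finite[OF e False] alpha_max_pos assms mult_right_mono[of alpha_max "alpha_real e" "\<beta> powr rv_index"]
        by auto
      from order_tendstoD(1)[OF scaled_cost_tendsto_powr[OF e False assms] this]
      show ?thesis
        by (rule eventually_mono) (use cb_M_pos in \<open>auto simp: pos_less_divide_eq less_imp_le\<close>)
    qed simp
  qed
qed

lemma opt_cost_lower: "\<exists>\<kappa>>0. \<forall>\<^sub>F n in sequentially. \<kappa> * (M n * cb (M n)) \<le> opt_cost E c I P (m n)"
proof -
  obtain i where i: "i \<in> I" "od_alpha P \<alpha> i = ereal alpha_max" using alpha_max_attained by blast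
  obtain \<mu> where \<mu>: "\<mu> > 0" "\<forall>\<^sub>F n in sequentially. \<mu> * M n < m n i"
    using salient_eventually[OF i(1)] by blast
  define K where "K = real (card (P i))"
  have "K > 0" using finite_paths[OF i(1)] paths_nonempty[OF i(1)] by (simp add: K_def card_gt_0_iff)
  define \<beta> where "\<beta> = \<mu> / K"
  define \<kappa> where "\<kappa> = alpha_max * \<beta> powr rv_index / 2"
  have "\<beta> > 0" "\<kappa> > 0" using \<mu>(1) \<open>K > 0\<close> alpha_max_pos by (simp_all add: \<beta>_def \<kappa>_def)
  have heavy: "\<exists>e\<in>set p. e \<in> E \<and> ereal alpha_max \<le> \<alpha> e" if "p \<in> P i" for p
  proof -
    have "ereal alpha_max \<le> path_alpha \<alpha> p" using od_alpha_le_path_alpha[of p P i \<alpha>] that i(2) by simp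
    then obtain e where "e \<in> set p" "ereal alpha_max \<le> \<alpha> e"
      using path_alpha_attained[of "ereal alpha_max" \<alpha> p] alpha_max_pos by auto
    then show ?thesis using path_edges[OF i(1) that] by auto
  qed
  from \<mu>(2) heavy_edge_cost_large[OF \<open>\<beta> > 0\<close>]
  have "\<forall>\<^sub>F n in sequentially. (M n * \<beta>) * (\<kappa> * cb (M n)) \<le> opt_cost E c I P (m n)"
  proof eventually_elim
    case (elim n)
    have "real (card (P i)) * (M n * \<beta>) \<le> m n i"
      using elim(1) \<open>K > 0\<close> by (simp add: \<beta>_def K_def mult.commute)
    moreover have "0 \<le> M n * \<beta>" "0 \<le> \<kappa> * cb (M n)"
      using M_pos cb_M_pos[of n] \<open>\<beta> > 0\<close> \<open>\<kappa> > 0\<close> by (simp_all add: less_imp_le)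
    moreover have "\<exists>e\<in>set p. \<kappa> * cb (M n) \<le> c e (M n * \<beta>)" if "p \<in> P i" for p
      using heavy[OF that] elim(2) unfolding \<kappa>_def by blast
    ultimately show ?case by (intro opt_cost_ge_heavy_edges[OF feq_feasible i(1)])
  qed
  then have "\<forall>\<^sub>F n in sequentially. (\<beta> * \<kappa>) * (M n * cb (M n)) \<le> opt_cost E c I P (m n)"
    by (rule eventually_mono) (simp add: mult_ac)
  with \<open>\<beta> > 0\<close> \<open>\<kappa> > 0\<close> show ?thesis by (intro exI[of _ "\<beta> * \<kappa>"]) auto
qed

lemma wardrop_cost_le_opt_plus:
  assumes "\<epsilon> > 0"
  shows "\<forall>\<^sub>F n in sequentially.
    social_cost E c (load I P (feq n)) \<le> opt_cost E c I P (m n) + \<epsilon> * (M n * cb (M n))"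
proof -
  obtain C where "C \<ge> 0" and opt: "\<forall>\<^sub>F n in sequentially. opt_cost E c I P (m n) \<le> C * (M n * cb (M n))"
    using opt_cost_upper by blast
  define T where "T = 1 + real (card E) + (rv_index+1) * real (card E)"
  have "T \<ge> 1" using rv_index(1) by (simp add: T_def)
  define \<epsilon>' where "\<epsilon>' = min 1 (\<epsilon> / T)"
  have \<epsilon>': "0 < \<epsilon>'" "\<epsilon>' \<le> 1" "T * \<epsilon>' \<le> \<epsilon>"
    using assms \<open>T \<ge> 1\<close> by (auto simp: \<epsilon>'_def min_def field_simps)
  obtain r where "r > 0" and reroute:
    "\<forall>\<^sub>F n in sequentially. \<forall>e\<in>{e\<in>E. \<alpha> e \<noteq> \<infinity>}. \<forall>u v. 0 \<le> u \<longrightarrow> u \<le> v \<longrightarrow> v \<le> M n \<longrightarrow>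
       v - u \<le> r * M n \<longrightarrow> v * c e v - u * c e u \<le> \<epsilon>' * (M n * cb (M n))"
    using eventually_reroute_bound[OF \<epsilon>'(1)] by blast
  \<comment> \<open>Near-optimal flows load each edge with \<open>\<alpha>\<^sub>e = \<infinity>\<close> by at most \<open>M n * \<delta>\<close>, so rerouting
    their flow raises no load by more than \<open>r * M n\<close>.\<close>
  define \<delta> where "\<delta> = r / (real (card E) + 1)"
  have "\<delta> > 0" "real (card E) * \<delta> \<le> r" using \<open>r > 0\<close> by (auto simp: \<delta>_def field_simps)
  note young = eventually_young_bound[OF \<epsilon>'(1)]
  note large = eventually_infinite_edges_costly[OF \<open>\<delta> > 0\<close>, of "(C+2)/\<delta>"]
  from opt reroute young large show ?thesis
  proof eventually_elim
    case (elim n)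
    have "social_cost E c (load I P (feq n)) \<le> opt_cost E c I P (m n) + T * \<epsilon>' * (M n * cb (M n))"
      unfolding T_def
      using elim \<open>C \<ge> 0\<close> \<open>\<delta> > 0\<close> \<open>real (card E) * \<delta> \<le> r\<close> \<epsilon>' rv_index(1) M_pos cb_M_pos
      by (intro wardrop_social_cost_le_opt[OF equilibria[rule_format]]) auto
    also have "T * \<epsilon>' * (M n * cb (M n)) \<le> \<epsilon> * (M n * cb (M n))"
      using \<epsilon>'(3) M_pos[rule_format, of n] cb_M_pos[of n] by (intro mult_right_mono) auto
    finally show ?case by simp
  qed
qed

lemma poa_tendsto_one: "(\<lambda>n. poa E c I P (m n) (feq n)) \<longlonglongrightarrow> 1"
proof (rule tendstoI)
  fix \<epsilon> :: real assume "\<epsilon> > 0"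
  obtain \<kappa> where "\<kappa> > 0" and lower: "\<forall>\<^sub>F n in sequentially. \<kappa> * (M n * cb (M n)) \<le> opt_cost E c I P (m n)"
    using opt_cost_lower by blast
  have "\<epsilon> * \<kappa> / 2 > 0" using \<open>\<epsilon> > 0\<close> \<open>\<kappa> > 0\<close> by simp
  from lower wardrop_cost_le_opt_plus[OF this]
  show "\<forall>\<^sub>F n in sequentially. dist (poa E c I P (m n) (feq n)) 1 < \<epsilon>"
  proof eventually_elim
    case (elim n)
    define Eq where "Eq = social_cost E c (load I P (feq n))"
    define Opt where "Opt = opt_cost E c I P (m n)"
    have "M n * cb (M n) > 0" using M_pos cb_M_pos[of n] by simp
    then have "Opt > 0" using elim(1) \<open>\<kappa> > 0\<close> unfolding Opt_def by (smt (verit) mult_pos_pos)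
    have "\<epsilon> * \<kappa> / 2 * (M n * cb (M n)) = \<epsilon> / 2 * (\<kappa> * (M n * cb (M n)))" by simp
    also have "\<dots> \<le> \<epsilon> / 2 * Opt"
      using elim(1) \<open>\<epsilon> > 0\<close> unfolding Opt_def by (intro mult_left_mono) auto
    finally have "Eq \<le> Opt + \<epsilon> / 2 * Opt" using elim(2) unfolding Eq_def Opt_def by linarith
    moreover have "Opt \<le> Eq" unfolding Opt_def Eq_def by (rule opt_cost_le[OF feq_feasible])
    ultimately have "1 \<le> Eq / Opt" "Eq / Opt \<le> 1 + \<epsilon> / 2"
      using \<open>Opt > 0\<close> by (simp_all add: divide_le_eq algebra_simps)
    moreover have "poa E c I P (m n) (feq n) = Eq / Opt" using \<open>Opt > 0\<close> by (simp add: poa_def Eq_def Opt_def)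
    ultimately show ?case using \<open>\<epsilon> > 0\<close> by (simp add: dist_real_def)
  qed
qed

end

theorem corollary6p4:
  fixes E :: "'e set" and src tgt :: "'e \<Rightarrow> 'v" and I :: "'i set"
    and orig dest :: "'i \<Rightarrow> 'v" and P :: "'i \<Rightarrow> 'e list set"
    and c :: "'e \<Rightarrow> real \<Rightarrow> real" and m :: "nat \<Rightarrow> 'i \<Rightarrow> real"
    and F :: "real filter" and cb :: "real \<Rightarrow> real" and \<alpha> :: "'e \<Rightarrow> ereal"
    and feq :: "nat \<Rightarrow> 'e list \<Rightarrow> real"
  assumes net: "routing_network E src tgt I orig dest P"
    and costs: "admissible_costs E c"
    and dem_nonneg: "\<forall>n. \<forall>i\<in>I. m n i \<ge> 0"
    and M_pos: "\<forall>n. (\<Sum>i\<in>I. m n i) > 0"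
    and omega: "F = at_right 0 \<or> F = at_top"
    and M_lim: "filterlim (\<lambda>n. \<Sum>i\<in>I. m n i) F sequentially"
    and bench: "benchmark F E c cb \<alpha>"
    and tight: "0 < (MAX i\<in>I. od_alpha P \<alpha> i)" "(MAX i\<in>I. od_alpha P \<alpha> i) < \<infinity>"
    and salient: "\<forall>i\<in>I. liminf (\<lambda>n. ereal (m n i / (\<Sum>j\<in>I. m n j))) > 0"
    and equilibria: "\<forall>n. wardrop c I P (m n) (feq n)"
  shows "(\<lambda>n. poa E c I P (m n) (feq n)) \<longlonglongrightarrow> 1"
proof -
  interpret poa_sequence E src tgt I orig dest P c m F cb \<alpha> feq
    using net costs M_pos omega M_lim bench tight salient equilibria by unfold_locales
  show ?thesis by (rule poa_tendsto_one)
qed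

end
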